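(* Let $f:\mathbb{R}^n\to\mathbb{R}$ be convex, continuously differentiable and locally strongly convex with locally Lipschitz gradient, with $\mathcal{X}^*:=\arg\min f\neq\emptyset$ and optimal value $f^*$. Fix $x^0$, $\alpha_0>0$, $\theta_0>0$, $\tau>1$, $0<\omega\le\frac1{\sqrt2}$, $\gamma_k\in[\gamma_{\min},\gamma_{\max}]\subset(0,\infty)$, and generate $x^{k+1}=x^k-\alpha_k\gamma_k\nabla f(x^k)$ with, for $k\ge1$, $L_k:=\frac{\|\nabla f(x^k)-\nabla f(x^{k-1})\|}{\|x^k-x^{k-1}\|}$, $\alpha_k:=\min\{\frac{\alpha_{k-1}\gamma_{k-1}}{\gamma_k}\sqrt{2(1-\omega^2)+\theta_{k-1}/\tau},\frac{\omega}{\gamma_kL_k}\}$, $\theta_k:=\frac{\alpha_k\gamma_k}{\alpha_{k-1}\gamma_{k-1}}$. Let $\eta:=\mathrm{dist}^2(x^0;\mathcal{X}^* )+2\alpha_0^2\gamma_0^2\|\nabla f(x^0)\|^2+2\alpha_0\gamma_0\theta_0(f(x^0)-f^* )$, $W:=\overline B(0;R)$ with $R>3\sqrt\eta+\mathrm{dist}(x^0;\mathcal{X}^* )+\|x^0\|$, let $L_W>0$ satisfy $\|\nabla f(x)-\nabla f(y)\|\le L_W\|x-y\|$ on $W$, and $\mu_W:=\inf_{x,y\in W,x\neq y}\frac{\langle\nabla f(y)-\nabla f(x),y-x\rangle}{\|y-x\|^2}$. Let $x^*\in\mathcal{X}^*$ and define $$\widehat{\mathcal L}(x^{k+1},x^k):=\|x^{k+1}-x^*\|^2+\Big(\tfrac{\omega^2}{1-\omega^2}+\tfrac{\mu_W}{2\omega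 L_W}\Big)\|x^{k+1}-x^k\|^2+2\alpha_k\gamma_k\Big(1+\tfrac{\theta_k}{2(1-\omega^2)}\Big)(f(x^k)-f^* ),$$ $$\hat q:=\min\Big\{\tfrac{\mu_W}{2}\min\{\alpha_0\gamma_0,\tfrac{\omega}{L_W}\},\ \tfrac{\mu_W(1-\omega^2)}{2\omega^3L_W+\mu_W(1-\omega^2)},\ \tfrac{(\tau-1)m}{\tau(2(1-\omega^2)+m)}\Big\},\quad m:=\min\{\tfrac{\alpha_0\gamma_0\mu_W}{\omega},\tfrac{\mu_W}{L_W}\}.$$ Then $\hat q\in(0,1)$ and $\widehat{\mathcal L}(x^{k+1},x^k)\le(1-\hat q)\widehat{\mathcal L}(x^k,x^{k-1})$ for all $k\in\mathbb{N}$.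
   Context: AdaSGA setting. $f$ is locally strongly convex if every $x$ has $\delta_x>0$, $\mu_x>0$ with $f(y)\ge f(z)+\langle\nabla f(z),y-z\rangle+\frac{\mu_x}{2}\|y-z\|^2$ for all $y,z\in B(x;\delta_x)$. $\mathrm{dist}(x;S)=\inf_{z\in S}\|z-x\|$. *)

theory Defs
  imports "HOL-Analysis.Analysis"
begin

definition locally_strongly_convex :: "('a::real_inner \<Rightarrow> real) \<Rightarrow> ('a \<Rightarrow> 'a) \<Rightarrow> bool" where
  "locally_strongly_convex f g \<longleftrightarrow>
     (\<forall>x. \<exists>\<delta>>0. \<exists>\<mu>>0. \<forall>y\<in>ball x \<delta>. \<forall>z\<in>ball x \<delta>.
        f y \<ge> f z + g z \<bullet> (y - z) + \<mu> / 2 * (norm (y - z))\<^sup>2)"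

definition locally_lipschitz_grad :: "('a::real_normed_vector \<Rightarrow> 'a) \<Rightarrow> bool" where
  "locally_lipschitz_grad g \<longleftrightarrow>
     (\<forall>x. \<exists>\<delta>>0. \<exists>L. \<forall>y\<in>ball x \<delta>. \<forall>z\<in>ball x \<delta>. norm (g y - g z) \<le> L * norm (y - z))"

definition argmin_set :: "('a \<Rightarrow> real) \<Rightarrow> 'a set" where
  "argmin_set f = {x. \<forall>y. f x \<le> f y}"

definition opt_val :: "('a \<Rightarrow> real) \<Rightarrow> real" where
  "opt_val f = Inf (range f)"

end

theory Submission
  imports Defs
begin

text \<open>
Without any strong convexity, the step-size rule alone makes the Lyapunov function with its
\<open>\<mu>W\<close>-term dropped (\<open>energy\<close> below) non-increasing, so every iterate stays within \<open>sqrt \<eta>\<close> of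
the minimiser, which is unique by local strong convexity. Hence all iterates lie in
\<open>W = cball 0 R\<close>, where \<open>f\<close> is \<open>\<mu>W\<close>-strongly convex (compactness turns local into uniform strong
monotonicity) and its gradient is \<open>LW\<close>-Lipschitz, so the step sizes \<open>\<alpha> k * \<gamma> k\<close> stay above
\<open>min (\<alpha> 0 * \<gamma> 0) (\<omega> / LW)\<close>. On \<open>W\<close> the strengthened inequalities turn the same one-step
estimate into a contraction: what is left after subtracting \<open>1 - q\<close> times the previous Lyapunov
value is a quadratic form in \<open>x k - x (k - 1)\<close> and \<open>x (k - 1) - xstar\<close>, and the three terms in
the definition of \<open>q\<close> are exactly what makes it nonnegative.
\<close>

section \<open>Elementary inequalities for the contraction rate\<close>

lemma rate_bound_from_cubic:
  fixes \<omega> \<sigma> q :: real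
  assumes om: "0 < \<omega>" "\<omega>\<^sup>2 \<le> 1/2" and s: "0 < \<sigma>" "\<sigma> \<le> \<omega>" and q: "0 \<le> q" "q \<le> \<sigma>/2"
    and cubic: "8*(1-\<omega>\<^sup>2)*q\<^sup>2*(1-q) \<le> \<sigma>\<^sup>2"
  shows "q*(5 - 3*\<omega>) \<le> 2*\<sigma>"
proof (cases "\<omega> \<ge> 1/3")
  case True
  have "q*(5 - 3*\<omega>) \<le> q*4" using True q by (intro mult_left_mono) auto
  then show ?thesis using q by linarith
next
  case False
  have "(5-3*\<omega>)\<^sup>2/4 \<le> 8*(1-\<omega>\<^sup>2)*(1-\<omega>/2)"
  proof -
    have "\<omega>\<^sup>2 \<le> \<omega>/3" using False om by (simp add: power2_eq_square mult_left_mono)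
    moreover have "0 \<le> \<omega>^3" using om by simp
    moreover have "8*(1-\<omega>\<^sup>2)*(1-\<omega>/2) - (5-3*\<omega>)\<^sup>2/4 = 7/4 + 7/2*\<omega> - 41/4*\<omega>\<^sup>2 + 4*\<omega>^3"
      by (simp add: field_simps power2_eq_square power3_eq_cube)
    ultimately show ?thesis using om by linarith
  qed
  also have "\<dots> \<le> 8*(1-\<omega>\<^sup>2)*(1-q)"
    using om q s by (intro mult_left_mono) auto
  finally have coeff: "(5-3*\<omega>)\<^sup>2/4 \<le> 8*(1-\<omega>\<^sup>2)*(1-q)" .
  have "(q*(5-3*\<omega>)/2)\<^sup>2 = q\<^sup>2 * ((5-3*\<omega>)\<^sup>2/4)" by (simp add: power2_eq_square)
  also have "\<dots> \<le> q\<^sup>2 * (8*(1-\<omega>\<^sup>2)*(1-q))" using coeff by (intro mult_left_mono) auto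
  also have "\<dots> \<le> \<sigma>\<^sup>2" using cubic by (simp add: algebra_simps)
  finally have "(q*(5-3*\<omega>)/2)\<^sup>2 \<le> \<sigma>\<^sup>2" .
  then have "q*(5-3*\<omega>)/2 \<le> \<sigma>" using s by (simp add: power2_le_iff_abs_le)
  then show ?thesis by linarith
qed

lemma rate_gap_nonneg:
  fixes \<omega> \<sigma> q :: real
  assumes om: "0 < \<omega>" "\<omega>\<^sup>2 \<le> 1/2" and s: "0 < \<sigma>" "\<sigma> \<le> \<omega>" and q: "0 \<le> q" "q \<le> \<sigma>/2"
    and cubic: "8*(1-\<omega>\<^sup>2)*q\<^sup>2*(1-q) \<le> \<sigma>\<^sup>2"
  shows "0 \<le> 4*\<sigma> - 5*q - (2 - 3*q)*\<sigma>\<^sup>2/\<omega>"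
proof -
  have key: "q*(5 - 3*\<omega>) \<le> 2*\<sigma>" by (rule rate_bound_from_cubic[OF om s q cubic])
  have o1: "\<omega> \<le> 1" using power2_le_imp_le[of \<omega> 1] om by simp
  \<comment> \<open>tangent line of the convex function \<open>\<sigma> \<mapsto> \<sigma>\<^sup>2/\<omega>\<close> at \<open>\<sigma> = \<omega>\<close>\<close>
  have "0 \<le> (\<sigma> - \<omega>)\<^sup>2/\<omega>" using om by simp
  then have tangent: "2*\<sigma> - \<omega> \<le> \<sigma>\<^sup>2/\<omega>" using om by (simp add: field_simps power2_eq_square)
  have "3*q*(2*\<sigma> - \<omega>) \<le> 3*q*(\<sigma>\<^sup>2/\<omega>)" using tangent q by (intro mult_left_mono) auto
  moreover have "4*\<sigma> - 5*q - 2*\<sigma>\<^sup>2/\<omega> + 3*q*(2*\<sigma> - \<omega>) = (4*\<sigma> - 5*q - 3*q*\<omega>) + (\<sigma>/\<omega>)*(6*q*\<omega> - 2*\<sigma>)"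
    using om by (simp add: field_simps power2_eq_square)
  moreover have "0 \<le> (4*\<sigma> - 5*q - 3*q*\<omega>) + (\<sigma>/\<omega>)*(6*q*\<omega> - 2*\<sigma>)"
  proof (cases "6*q*\<omega> - 2*\<sigma> \<ge> 0")
    case True
    have "q*(5+3*\<omega>) \<le> (\<sigma>/2)*(5+3*\<omega>)" using q om by (intro mult_right_mono) auto
    moreover have "(\<sigma>/2)*(5+3*\<omega>) \<le> (\<sigma>/2)*8" using o1 s by (intro mult_left_mono) auto
    moreover have "5*q + 3*q*\<omega> = q*(5+3*\<omega>)" by (simp add: algebra_simps)
    moreover have "0 \<le> (\<sigma>/\<omega>)*(6*q*\<omega> - 2*\<sigma>)" using True s om by simp
    ultimately show ?thesis by linarith
  next
    case False
    have "\<sigma>/\<omega> \<le> 1" using s om by simp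
    then have "1*(6*q*\<omega> - 2*\<sigma>) \<le> (\<sigma>/\<omega>)*(6*q*\<omega> - 2*\<sigma>)"
      using False by (intro mult_right_mono_neg) auto
    then show ?thesis using key by (simp add: algebra_simps)
  qed
  moreover have "(2 - 3*q)*\<sigma>\<^sup>2/\<omega> = 2*\<sigma>\<^sup>2/\<omega> - 3*q*(\<sigma>\<^sup>2/\<omega>)" using om by (simp add: field_simps)
  ultimately show ?thesis by linarith
qed

lemma rate_le_weighted_gap:
  fixes \<omega> \<sigma> q :: real
  assumes om: "0 < \<omega>" "\<omega>\<^sup>2 \<le> 1/2" and s: "0 < \<sigma>" "\<sigma> \<le> \<omega>" and q: "0 \<le> q" "q \<le> \<sigma>/2"
    and cubic: "8*(1-\<omega>\<^sup>2)*q\<^sup>2*(1-q) \<le> \<sigma>\<^sup>2"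
  shows "q \<le> (4 - 6*q)*(\<sigma> - \<sigma>\<^sup>2/(2*\<omega>) - q) + 3/2*\<sigma>\<^sup>2/(1-\<omega>\<^sup>2)"
proof -
  have gap: "0 \<le> 4*\<sigma> - 5*q - (2 - 3*q)*\<sigma>\<^sup>2/\<omega>" by (rule rate_gap_nonneg[OF om s q cubic])
  have b: "0 < 1-\<omega>\<^sup>2" "1-\<omega>\<^sup>2 \<le> 1" using om by auto
  have "\<sigma>\<^sup>2*(1-\<omega>\<^sup>2) \<le> \<sigma>\<^sup>2" using b by (simp add: mult_left_le)
  then have "\<sigma>\<^sup>2 \<le> \<sigma>\<^sup>2/(1-\<omega>\<^sup>2)" using b by (simp add: pos_le_divide_eq)
  moreover have "0 \<le> 3/2*\<sigma>\<^sup>2 - 6*q*\<sigma> + 6*q\<^sup>2"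
  proof -
    have "3/2*\<sigma>\<^sup>2 - 6*q*\<sigma> + 6*q\<^sup>2 = 6*(q - \<sigma>/2)\<^sup>2" by (simp add: power2_eq_square algebra_simps)
    then show ?thesis by simp
  qed
  moreover have "(4 - 6*q)*(\<sigma> - \<sigma>\<^sup>2/(2*\<omega>) - q) + 3/2*\<sigma>\<^sup>2/(1-\<omega>\<^sup>2) - q
      = (4*\<sigma> - 5*q - (2 - 3*q)*\<sigma>\<^sup>2/\<omega>) + (3/2*\<sigma>\<^sup>2/(1-\<omega>\<^sup>2) - 6*q*\<sigma> + 6*q\<^sup>2)"
    using om by (simp add: field_simps power2_eq_square)
  ultimately show ?thesis using gap by linarith
qed

lemma contraction_discriminant:
  fixes \<omega> \<sigma> \<theta> q S :: real
  assumes om: "0 < \<omega>" "\<omega>\<^sup>2 \<le> 1/2" and s: "0 < \<sigma>" "\<sigma> \<le> \<omega>" and th: "0 < \<theta>"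
    and q: "0 \<le> q" "q \<le> \<sigma>/2" "2*\<theta>*q \<le> \<sigma>"
    and ratio: "2*(1-\<omega>\<^sup>2)*(1-q) \<le> \<theta>\<^sup>2"
    and S: "3/2*\<theta>*\<sigma>/(1-\<omega>\<^sup>2) \<le> S"
  shows "(\<sigma> - \<sigma>\<^sup>2/(2*\<omega>))\<^sup>2 \<le> (\<sigma> - \<sigma>\<^sup>2/(2*\<omega>) - q + q*\<sigma>/\<theta>) * (\<sigma> - \<sigma>\<^sup>2/(2*\<omega>) - q + S)"
proof -
  define \<beta> where "\<beta> = 1 - \<omega>\<^sup>2"
  define D where "D = \<sigma> - \<sigma>\<^sup>2/(2*\<omega>) - q"
  have b0: "0 < \<beta>" unfolding \<beta>_def using om by simp
  have D0: "0 \<le> D"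
  proof -
    have "\<sigma>\<^sup>2/(2*\<omega>) \<le> \<sigma>/2" using s om by (simp add: power2_eq_square field_simps mult_left_mono)
    then show ?thesis unfolding D_def using q by linarith
  qed
  have "8*(1-\<omega>\<^sup>2)*q\<^sup>2*(1-q) = 4*q\<^sup>2*(2*(1-\<omega>\<^sup>2)*(1-q))" by (simp add: algebra_simps)
  also have "\<dots> \<le> 4*q\<^sup>2*\<theta>\<^sup>2" using ratio by (intro mult_left_mono) auto
  also have "\<dots> = (2*\<theta>*q)\<^sup>2" by (simp add: power2_eq_square algebra_simps)
  also have "\<dots> \<le> \<sigma>\<^sup>2" using q th by (intro power_mono) auto
  finally have gap: "q \<le> (4 - 6*q)*D + 3/2*\<sigma>\<^sup>2/\<beta>"
    unfolding D_def \<beta>_def by (rule rate_le_weighted_gap[OF om s q(1,2)])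
  have "6*(1-q)*q = 3*(2*\<beta>*(1-q))*q/\<beta>" using b0 by (simp add: field_simps)
  also have "\<dots> \<le> 3*\<theta>\<^sup>2*q/\<beta>" using ratio q b0 unfolding \<beta>_def by (intro divide_right_mono mult_right_mono) auto
  also have "\<dots> = 3/2*\<theta>*(2*\<theta>*q)/\<beta>" by (simp add: power2_eq_square)
  also have "\<dots> \<le> 3/2*\<theta>*\<sigma>/\<beta>" using q th b0 by (intro divide_right_mono mult_left_mono) auto
  finally have S6: "6*(1-q)*q \<le> S" using S unfolding \<beta>_def by linarith
  have "3/2*q*\<sigma>\<^sup>2/\<beta> = q*\<sigma>/\<theta> * (3/2*\<theta>*\<sigma>/\<beta>)" using th by (simp add: power2_eq_square field_simps)
  also have "\<dots> \<le> q*\<sigma>/\<theta> * S" using S q s th unfolding \<beta>_def by (intro mult_left_mono) auto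
  finally have qS: "3/2*q*\<sigma>\<^sup>2/\<beta> \<le> q*\<sigma>/\<theta> * S" .
  have "q*q \<le> q*((4 - 6*q)*D + 3/2*\<sigma>\<^sup>2/\<beta>)" using gap q by (intro mult_left_mono) auto
  moreover have "q*((4 - 6*q)*D + 3/2*\<sigma>\<^sup>2/\<beta>) = 4*(q*D) - 6*(q*q*D) + 3/2*q*\<sigma>\<^sup>2/\<beta>"
    by (simp add: algebra_simps)
  moreover have "6*(1-q)*q*D \<le> S*D" using S6 D0 by (rule mult_right_mono)
  moreover have "6*(1-q)*q*D = 6*(q*D) - 6*(q*q*D)" by (simp add: algebra_simps)
  moreover have "0 \<le> q*\<sigma>/\<theta>*D" using q s th D0 by simp
  moreover have "(D + q)\<^sup>2 = D*D + 2*(q*D) + q*q" by (simp add: power2_eq_square algebra_simps)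
  moreover have "(D + q*\<sigma>/\<theta>)*(D + S) = D*D + S*D + q*\<sigma>/\<theta>*D + q*\<sigma>/\<theta>*S"
    using th by (simp add: field_simps)
  ultimately have "(D + q)\<^sup>2 \<le> (D + q*\<sigma>/\<theta>)*(D + S)" using qS by linarith
  then show ?thesis unfolding D_def by simp
qed

lemma lyapunov_weight_bound:
  fixes \<omega> \<mu> L q :: real
  assumes om: "0 < \<omega>" "\<omega>\<^sup>2 < 1" and mu: "0 < \<mu>" and L: "0 < L"
    and q: "q \<le> \<mu>*(1-\<omega>\<^sup>2)/(2*\<omega>^3*L + \<mu>*(1-\<omega>\<^sup>2))"
  shows "\<omega>\<^sup>2/(1-\<omega>\<^sup>2) \<le> (1-q)*(\<omega>\<^sup>2/(1-\<omega>\<^sup>2) + \<mu>/(2*\<omega>*L))"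
proof -
  define \<beta> where "\<beta> = 1 - \<omega>\<^sup>2"
  have b0: "0 < \<beta>" using om unfolding \<beta>_def by simp
  have den: "0 < 2*\<omega>^3*L + \<mu>*\<beta>" using om mu L b0 by (simp add: add_pos_pos)
  have "1 - \<mu>*\<beta>/(2*\<omega>^3*L + \<mu>*\<beta>) = 2*\<omega>^3*L/(2*\<omega>^3*L + \<mu>*\<beta>)"
    using den by (simp add: field_simps)
  moreover have "\<omega>\<^sup>2/\<beta> + \<mu>/(2*\<omega>*L) = (2*\<omega>^3*L + \<mu>*\<beta>)/(2*\<omega>*L*\<beta>)"
    using om L b0 by (simp add: field_simps power2_eq_square power3_eq_cube)
  moreover have "2*\<omega>^3*L/(2*\<omega>^3*L + \<mu>*\<beta>) * ((2*\<omega>^3*L + \<mu>*\<beta>)/(2*\<omega>*L*\<beta>)) = \<omega>\<^sup>2/\<beta>"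
    using den om L by (simp add: power2_eq_square power3_eq_cube)
  ultimately have "\<omega>\<^sup>2/\<beta> = (1 - \<mu>*\<beta>/(2*\<omega>^3*L + \<mu>*\<beta>)) * (\<omega>\<^sup>2/\<beta> + \<mu>/(2*\<omega>*L))"
    by simp
  also have "\<dots> \<le> (1-q) * (\<omega>\<^sup>2/\<beta> + \<mu>/(2*\<omega>*L))"
    using q om mu L b0 unfolding \<beta>_def by (intro mult_right_mono) auto
  finally show ?thesis unfolding \<beta>_def .
qed

lemma stepsize_excess_le:
  fixes a h \<omega> \<tau> \<theta>p q :: real
  assumes a: "0 < a" and om: "\<omega>\<^sup>2 < 1" and thp: "0 \<le> \<theta>p" and q: "q \<le> 1 - 1/\<tau>"
    and growth: "h\<^sup>2 \<le> a\<^sup>2 * (2*(1-\<omega>\<^sup>2) + \<theta>p/\<tau>)"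
  shows "h\<^sup>2/(a*(1-\<omega>\<^sup>2)) - (1-q)*(2*a*(1 + \<theta>p/(2*(1-\<omega>\<^sup>2)))) \<le> 2*a*q"
proof -
  define \<beta> where "\<beta> = 1 - \<omega>\<^sup>2"
  have b0: "0 < \<beta>" using om unfolding \<beta>_def by simp
  have "h\<^sup>2/(a*\<beta>) \<le> a\<^sup>2 * (2*\<beta> + \<theta>p/\<tau>)/(a*\<beta>)"
    using growth a b0 unfolding \<beta>_def by (intro divide_right_mono) auto
  also have "\<dots> = 2*a*q + (1-q)*(2*a*(1 + \<theta>p/(2*\<beta>))) + (a/\<beta>)*(\<theta>p*(1/\<tau> - 1 + q))"
    using a b0 by (simp add: field_simps power2_eq_square)
  also have "\<dots> \<le> 2*a*q + (1-q)*(2*a*(1 + \<theta>p/(2*\<beta>)))"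
  proof -
    have "0 \<le> a/\<beta>" using a b0 by simp
    moreover have "\<theta>p*(1/\<tau> - 1 + q) \<le> 0" using thp q by (simp add: mult_nonneg_nonpos)
    ultimately have "(a/\<beta>)*(\<theta>p*(1/\<tau> - 1 + q)) \<le> 0" by (rule mult_nonneg_nonpos)
    then show ?thesis by linarith
  qed
  finally show ?thesis unfolding \<beta>_def by simp
qed

lemma stepsize_ratio_lower:
  fixes a h \<omega> \<theta>p q :: real
  assumes a: "0 < a" and om: "\<omega>\<^sup>2 < 1" and thp: "0 \<le> \<theta>p" and q: "q < 1"
    and excess: "(1-q)*(2*a*(1 + \<theta>p/(2*(1-\<omega>\<^sup>2)))) < h\<^sup>2/(a*(1-\<omega>\<^sup>2))"
  shows "2*(1-\<omega>\<^sup>2)*(1-q) \<le> (h/a)\<^sup>2"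
proof -
  define \<beta> where "\<beta> = 1 - \<omega>\<^sup>2"
  have b0: "0 < \<beta>" using om unfolding \<beta>_def by simp
  have "(1-q)*(2*a) \<le> (1-q)*(2*a*(1 + \<theta>p/(2*\<beta>)))"
    using q a thp b0 by (intro mult_left_mono) auto
  also have "\<dots> < h\<^sup>2/(a*\<beta>)" using excess unfolding \<beta>_def .
  finally have "2*\<beta>*(1-q)*a\<^sup>2 < h\<^sup>2" using a b0 by (simp add: field_simps power2_eq_square)
  then show ?thesis unfolding \<beta>_def using a by (simp add: field_simps power_divide)
qed

lemma inner_quadratic_form_nonneg:
  fixes v u :: "'a::real_inner" and A B C :: real
  assumes "0 \<le> A" "0 \<le> C" "B\<^sup>2 \<le> A*C"
  shows "0 \<le> A*(v \<bullet> v) + 2*B*(v \<bullet> u) + C*(u \<bullet> u)"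
proof (cases "A = 0")
  case True
  then show ?thesis using assms by simp
next
  case False
  have "0 \<le> (A *\<^sub>R v + B *\<^sub>R u) \<bullet> (A *\<^sub>R v + B *\<^sub>R u)" by simp
  also have "\<dots> = A*A*(v \<bullet> v) + 2*A*B*(v \<bullet> u) + B*B*(u \<bullet> u)"
    by (simp add: inner_add_left inner_add_right inner_commute algebra_simps)
  finally have "0 \<le> A*(A*(v \<bullet> v) + 2*B*(v \<bullet> u) + C*(u \<bullet> u))"
    using mult_right_mono[of 0 "A*C - B*B" "u \<bullet> u"] assms by (simp add: power2_eq_square algebra_simps)
  then show ?thesis using False assms by (simp add: zero_le_mult_iff)
qed

section \<open>One-step estimates\<close>

text \<open>
In the one-step lemmas \<open>d\<close> and \<open>u\<close> stand for \<open>x k - xstar\<close> and \<open>x k - x (k - 1)\<close>, \<open>G\<close> and \<open>H\<close>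
for the gradients at \<open>x k\<close> and \<open>x (k - 1)\<close>, \<open>h\<close> and \<open>a\<close> for the step sizes \<open>\<alpha> k * \<gamma> k\<close> and
\<open>\<alpha> (k - 1) * \<gamma> (k - 1)\<close>, and \<open>Fx\<close>, \<open>Fy\<close> for the optimality gaps at \<open>x k\<close> and \<open>x (k - 1)\<close>.
\<close>

lemma step_modulus_le:
  fixes u G H :: "'a::real_inner"
  assumes u: "u \<noteq> 0" and h: "0 < h"
    and mono: "\<mu> * (norm u)\<^sup>2 \<le> (G - H) \<bullet> u" and lip: "h * norm (G - H) \<le> \<omega> * norm u"
  shows "h * \<mu> \<le> \<omega>"
proof -
  have "\<mu> * (norm u)\<^sup>2 \<le> norm (G - H) * norm u" using mono norm_cauchy_schwarz[of "G - H" u] by linarith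
  then have "\<mu> * norm u \<le> norm (G - H)" using u by (simp add: power2_eq_square)
  then have "h * \<mu> * norm u \<le> \<omega> * norm u" using lip h by (metis mult.assoc mult_left_mono order_trans less_imp_le)
  then show ?thesis using u by simp
qed

lemma interpolated_descent:
  fixes d G :: "'a::real_inner"
  assumes h: "0 < h" and om: "0 < \<omega>" and L: "0 < L" and modulus: "0 \<le> h*\<mu>" "h*\<mu> \<le> \<omega>"
    and strong: "Fx + \<mu>/2*(norm d)\<^sup>2 \<le> G \<bullet> d" and smooth: "Fx + (norm G)\<^sup>2/(2*L) \<le> G \<bullet> d"
  shows "2*h*Fx + (h*\<mu> - (h*\<mu>)\<^sup>2/(2*\<omega>))*(norm d)\<^sup>2 + \<mu>/(2*\<omega>*L)*(norm (h *\<^sub>R G))\<^sup>2 \<le> 2*h*(G \<bullet> d)"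
proof -
  define t where "t = h*\<mu>/(2*\<omega>)"
  have t: "0 \<le> t" "t \<le> 1" unfolding t_def using modulus om by auto
  have "2*h*(1-t)*(Fx + \<mu>/2*(norm d)\<^sup>2) \<le> 2*h*(1-t)*(G \<bullet> d)"
    using strong h t by (intro mult_left_mono) auto
  moreover have "2*h*t*(Fx + (norm G)\<^sup>2/(2*L)) \<le> 2*h*t*(G \<bullet> d)"
    using smooth h t by (intro mult_left_mono) auto
  moreover have "2*h*(1-t)*(Fx + \<mu>/2*(norm d)\<^sup>2) + 2*h*t*(Fx + (norm G)\<^sup>2/(2*L))
      = 2*h*Fx + (h*\<mu> - (h*\<mu>)\<^sup>2/(2*\<omega>))*(norm d)\<^sup>2 + \<mu>/(2*\<omega>*L)*(norm (h *\<^sub>R G))\<^sup>2"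
    unfolding t_def using om L by (simp add: field_simps power2_eq_square)
  moreover have "2*h*(1-t)*(G \<bullet> d) + 2*h*t*(G \<bullet> d) = 2*h*(G \<bullet> d)" by (simp add: algebra_simps)
  ultimately show ?thesis by linarith
qed

lemma scaled_gradient_step_bound:
  fixes u G H :: "'a::real_inner" and a h \<mu> \<omega> Fx Fy :: real
  assumes a: "0 < a" and h: "0 \<le> h" and uH: "u = - (a *\<^sub>R H)"
    and decrease: "- (G \<bullet> u) + \<mu>/2*(norm u)\<^sup>2 \<le> Fy - Fx"
    and mono: "\<mu>*(norm u)\<^sup>2 \<le> (G - H) \<bullet> u"
    and lip: "h * norm (G - H) \<le> \<omega> * norm u"
  shows "h\<^sup>2*(norm G)\<^sup>2 + h\<^sup>2/a*Fx \<le> (\<omega>\<^sup>2 - 3/2*(h/a)*(h*\<mu>))*(norm u)\<^sup>2 + h\<^sup>2/a*Fy"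
proof -
  define K where "K = h\<^sup>2/a"
  have K0: "0 \<le> K" unfolding K_def using a by simp
  have H: "H = -(1/a) *\<^sub>R u" using uH a by simp
  have "(h * norm (G - H))\<^sup>2 \<le> (\<omega> * norm u)\<^sup>2" using lip h by (intro power_mono) auto
  moreover have "(h * norm (G - H))\<^sup>2 = h\<^sup>2*(norm G)\<^sup>2 + 2*K*(G \<bullet> u) + K/a*(norm u)\<^sup>2"
    unfolding power_mult_distrib power2_norm_eq_inner H K_def using a
    by (simp add: inner_add_left inner_add_right inner_commute algebra_simps power2_eq_square)
  ultimately have lip2: "h\<^sup>2*(norm G)\<^sup>2 + 2*K*(G \<bullet> u) + K/a*(norm u)\<^sup>2 \<le> \<omega>\<^sup>2*(norm u)\<^sup>2"
    by (simp add: power_mult_distrib)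
  have "\<mu>*(norm u)\<^sup>2 \<le> G \<bullet> u + (norm u)\<^sup>2/a"
    using mono unfolding H by (simp add: inner_add_left power2_norm_eq_inner)
  from mult_left_mono[OF this K0] have mono2: "K*(\<mu>*(norm u)\<^sup>2) \<le> K*(G \<bullet> u) + K/a*(norm u)\<^sup>2"
    by (simp add: algebra_simps)
  from mult_left_mono[OF decrease K0] have decrease2: "K*Fx \<le> K*Fy + K*(G \<bullet> u) - K*(\<mu>*(norm u)\<^sup>2)/2"
    by (simp add: algebra_simps)
  have "(\<omega>\<^sup>2 - 3/2*(h/a)*(h*\<mu>))*(norm u)\<^sup>2 = \<omega>\<^sup>2*(norm u)\<^sup>2 - 3/2*(K*(\<mu>*(norm u)\<^sup>2))"
    unfolding K_def by (simp add: power2_eq_square algebra_simps)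
  then have "h\<^sup>2*(norm G)\<^sup>2 + K*Fx \<le> (\<omega>\<^sup>2 - 3/2*(h/a)*(h*\<mu>))*(norm u)\<^sup>2 + K*Fy"
    using lip2 mono2 decrease2 by linarith
  then show ?thesis unfolding K_def .
qed

lemma gradient_step_estimate:
  fixes d u G H :: "'a::real_inner" and a h \<mu> \<omega> s e Fx Fy :: real
  assumes a: "0 < a" and h: "0 < h" and om: "\<omega>\<^sup>2 < 1"
    and uH: "u = - (a *\<^sub>R H)"
    and descent: "2*h*Fx + s*(norm d)\<^sup>2 + e*(norm (h *\<^sub>R G))\<^sup>2 \<le> 2*h*(G \<bullet> d)"
    and decrease: "- (G \<bullet> u) + \<mu>/2*(norm u)\<^sup>2 \<le> Fy - Fx"
    and mono: "\<mu>*(norm u)\<^sup>2 \<le> (G - H) \<bullet> u"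
    and lip: "h * norm (G - H) \<le> \<omega> * norm u"
  shows "(norm (d - h *\<^sub>R G))\<^sup>2 + (\<omega>\<^sup>2/(1-\<omega>\<^sup>2) + e) * (norm (h *\<^sub>R G))\<^sup>2 + 2*h*(1 + (h/a)/(2*(1-\<omega>\<^sup>2)))*Fx
       \<le> (1 - s)*(norm d)\<^sup>2 + (\<omega>\<^sup>2 - 3/2*(h/a)*(h*\<mu>))/(1-\<omega>\<^sup>2) * (norm u)\<^sup>2 + h\<^sup>2/(a*(1-\<omega>\<^sup>2)) * Fy"
proof -
  define \<beta> where "\<beta> = 1 - \<omega>\<^sup>2"
  have b0: "0 < \<beta>" using om unfolding \<beta>_def by simp
  note main = scaled_gradient_step_bound[OF a less_imp_le[OF h] uH decrease mono lip]
  have "(norm (d - h *\<^sub>R G))\<^sup>2 + (\<omega>\<^sup>2/\<beta> + e) * (norm (h *\<^sub>R G))\<^sup>2 + 2*h*(1 + (h/a)/(2*\<beta>))*Fx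
      = (norm d)\<^sup>2 - 2*h*(G \<bullet> d) + e*(norm (h *\<^sub>R G))\<^sup>2 + 2*h*Fx + (h\<^sup>2*(norm G)\<^sup>2 + h\<^sup>2/a*Fx)/\<beta>"
  proof -
    have c0: "\<omega>\<^sup>2/\<beta> = 1/\<beta> - 1" using b0 unfolding \<beta>_def by (simp add: field_simps)
    have dG: "(norm (d - h *\<^sub>R G))\<^sup>2 = (norm d)\<^sup>2 - 2*h*(G \<bullet> d) + h\<^sup>2*(norm G)\<^sup>2"
      unfolding power2_norm_eq_inner
      by (simp add: inner_diff_left inner_diff_right inner_commute power2_eq_square algebra_simps)
    have hG: "(norm (h *\<^sub>R G))\<^sup>2 = h\<^sup>2*(norm G)\<^sup>2" by (simp add: power_mult_distrib)
    show ?thesis unfolding c0 dG hG using a b0 by (simp add: field_simps power2_eq_square)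
  qed
  also have "\<dots> \<le> (1 - s)*(norm d)\<^sup>2 + ((\<omega>\<^sup>2 - 3/2*(h/a)*(h*\<mu>))*(norm u)\<^sup>2 + h\<^sup>2/a*Fy)/\<beta>"
    using descent divide_right_mono[OF main, of \<beta>] b0 by (simp add: algebra_simps)
  also have "\<dots> = (1 - s)*(norm d)\<^sup>2 + (\<omega>\<^sup>2 - 3/2*(h/a)*(h*\<mu>))/\<beta> * (norm u)\<^sup>2 + h\<^sup>2/(a*\<beta>) * Fy"
    by (simp add: add_divide_distrib)
  finally show ?thesis unfolding \<beta>_def .
qed

lemma quadratic_remainder_bound:
  fixes d u :: "'a::real_inner"
  assumes a: "0 < a" and q: "0 \<le> q" and mu: "0 \<le> \<mu>" and D: "0 \<le> D" and S: "0 \<le> S"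
    and disc: "(D + q)\<^sup>2 \<le> (D + a*q*\<mu>)*(D + S)"
    and Fy: "Fy \<le> -(1/a)*(u \<bullet> (d - u)) - \<mu>/2*(norm (d - u))\<^sup>2"
  shows "2*a*q*Fy \<le> D*(norm d)\<^sup>2 + S*(norm u)\<^sup>2"
proof -
  have "2*a*q*Fy \<le> 2*a*q*(-(1/a)*(u \<bullet> (d - u)) - \<mu>/2*(norm (d - u))\<^sup>2)"
    using Fy a q by (intro mult_left_mono) auto
  moreover \<comment> \<open>writing \<open>d = (d - u) + u\<close>, the slack is a quadratic form in \<open>d - u\<close> and \<open>u\<close>\<close>
  have "0 \<le> (D + a*q*\<mu>)*((d-u) \<bullet> (d-u)) + 2*(D+q)*((d-u) \<bullet> u) + (D + S)*(u \<bullet> u)"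
    by (rule inner_quadratic_form_nonneg) (use D S a q mu disc in auto)
  moreover have "D*(norm d)\<^sup>2 + S*(norm u)\<^sup>2 - 2*a*q*(-(1/a)*(u \<bullet> (d - u)) - \<mu>/2*(norm (d - u))\<^sup>2)
      = (D + a*q*\<mu>)*((d-u) \<bullet> (d-u)) + 2*(D+q)*((d-u) \<bullet> u) + (D + S)*(u \<bullet> u)"
    using a by (simp add: power2_norm_eq_inner inner_diff_left inner_diff_right inner_commute field_simps)
  ultimately show ?thesis by linarith
qed

lemma lyapunov_remainder_nonneg:
  fixes d u :: "'a::real_inner" and a h \<mu> \<omega> \<tau> \<theta>p q S Fy :: real
  assumes a: "0 < a" and h: "0 < h" and mu: "0 < \<mu>" and om: "0 < \<omega>" "\<omega>\<^sup>2 \<le> 1/2"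
    and thp: "0 \<le> \<theta>p" and modulus: "h*\<mu> \<le> \<omega>"
    and Fy0: "0 \<le> Fy" and Fy: "Fy \<le> -(1/a)*(u \<bullet> (d - u)) - \<mu>/2*(norm (d - u))\<^sup>2"
    and growth: "h\<^sup>2 \<le> a\<^sup>2 * (2*(1-\<omega>\<^sup>2) + \<theta>p/\<tau>)"
    and q: "0 < q" "2*q \<le> \<mu>*h" "2*q \<le> \<mu>*a" "q \<le> 1 - 1/\<tau>"
    and S: "3/2*(h/a)*(h*\<mu>)/(1-\<omega>\<^sup>2) \<le> S"
  shows "(h\<^sup>2/(a*(1-\<omega>\<^sup>2)) - (1-q)*(2*a*(1 + \<theta>p/(2*(1-\<omega>\<^sup>2))))) * Fy
         \<le> (h*\<mu> - (h*\<mu>)\<^sup>2/(2*\<omega>) - q)*(norm d)\<^sup>2 + S*(norm u)\<^sup>2"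
proof -
  define \<sigma> where "\<sigma> = h*\<mu>"
  define \<theta> where "\<theta> = h/a"
  define D where "D = \<sigma> - \<sigma>\<^sup>2/(2*\<omega>) - q"
  define ex where "ex = h\<^sup>2/(a*(1-\<omega>\<^sup>2)) - (1-q)*(2*a*(1 + \<theta>p/(2*(1-\<omega>\<^sup>2))))"
  have om1: "\<omega>\<^sup>2 < 1" using om by simp
  have s0: "0 < \<sigma>" and th0: "0 < \<theta>" unfolding \<sigma>_def \<theta>_def using a h mu by auto
  have q_sigma: "q \<le> \<sigma>/2" "2*\<theta>*q \<le> \<sigma>"
  proof -
    show "q \<le> \<sigma>/2" using q unfolding \<sigma>_def by (simp add: mult.commute)
    have "2*\<theta>*q = \<theta>*(2*q)" by simp
    also have "\<dots> \<le> \<theta>*(\<mu>*a)" using q th0 by (intro mult_left_mono) auto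
    also have "\<dots> = \<sigma>" unfolding \<theta>_def \<sigma>_def using a by simp
    finally show "2*\<theta>*q \<le> \<sigma>" .
  qed
  have D0: "0 \<le> D"
  proof -
    have "\<sigma>*\<sigma> \<le> \<sigma>*\<omega>" using s0 modulus unfolding \<sigma>_def by (intro mult_left_mono) auto
    then have "\<sigma>\<^sup>2/(2*\<omega>) \<le> \<sigma>/2" using om by (simp add: pos_divide_le_eq power2_eq_square)
    then show ?thesis unfolding D_def using q_sigma by linarith
  qed
  have "0 \<le> 3/2*(h/a)*(h*\<mu>)/(1-\<omega>\<^sup>2)" using a h mu om1 by simp
  then have S0: "0 \<le> S" using S by linarith
  have "ex*Fy \<le> D*(norm d)\<^sup>2 + S*(norm u)\<^sup>2"
  proof (cases "ex \<le> 0")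
    case True
    then have "ex*Fy \<le> 0" using Fy0 by (simp add: mult_nonpos_nonneg)
    moreover have "0 \<le> D*(norm d)\<^sup>2 + S*(norm u)\<^sup>2" using D0 S0 by simp
    ultimately show ?thesis by linarith
  next
    case False
    have "\<omega> \<le> 1" using power2_le_imp_le[of \<omega> 1] om by simp
    then have "q < 1" using q_sigma modulus unfolding \<sigma>_def by linarith
    then have "2*(1-\<omega>\<^sup>2)*(1-q) \<le> \<theta>\<^sup>2"
      unfolding \<theta>_def using stepsize_ratio_lower[OF a om1 thp] False unfolding ex_def by simp
    then have "(\<sigma> - \<sigma>\<^sup>2/(2*\<omega>))\<^sup>2 \<le> (\<sigma> - \<sigma>\<^sup>2/(2*\<omega>) - q + q*\<sigma>/\<theta>) * (\<sigma> - \<sigma>\<^sup>2/(2*\<omega>) - q + S)"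
      using contraction_discriminant[OF om s0 _ th0 _ q_sigma] modulus q S
      unfolding \<sigma>_def \<theta>_def by simp
    moreover have "q*\<sigma>/\<theta> = a*q*\<mu>" unfolding \<sigma>_def \<theta>_def using a h by simp
    ultimately have disc: "(D + q)\<^sup>2 \<le> (D + a*q*\<mu>)*(D + S)" unfolding D_def by simp
    have "ex*Fy \<le> 2*a*q*Fy"
      using stepsize_excess_le[OF a om1 thp q(4) growth] Fy0 unfolding ex_def by (rule mult_right_mono)
    also have "\<dots> \<le> D*(norm d)\<^sup>2 + S*(norm u)\<^sup>2"
      using quadratic_remainder_bound[OF a _ _ D0 S0 disc Fy] q mu by simp
    finally show ?thesis .
  qed
  then show ?thesis unfolding ex_def D_def \<sigma>_def .
qed

lemma lyapunov_contraction_step: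
  fixes d u G H :: "'a::real_inner" and a h \<mu> L \<omega> \<tau> \<theta>p q Fx Fy :: real
  assumes a: "0 < a" and h: "0 < h" and mu: "0 < \<mu>" and L: "0 < L"
    and om: "0 < \<omega>" "\<omega>\<^sup>2 \<le> 1/2" and thp: "0 \<le> \<theta>p"
    and uH: "u = - (a *\<^sub>R H)" and Fy0: "0 \<le> Fy"
    and strong_x: "Fx + \<mu>/2*(norm d)\<^sup>2 \<le> G \<bullet> d"
    and smooth_x: "Fx + (norm G)\<^sup>2/(2*L) \<le> G \<bullet> d"
    and decrease: "- (G \<bullet> u) + \<mu>/2*(norm u)\<^sup>2 \<le> Fy - Fx"
    and strong_y: "Fy \<le> H \<bullet> (d - u) - \<mu>/2*(norm (d - u))\<^sup>2"
    and mono: "\<mu>*(norm u)\<^sup>2 \<le> (G - H) \<bullet> u"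
    and lip: "h * norm (G - H) \<le> \<omega> * norm u"
    and growth: "h\<^sup>2 \<le> a\<^sup>2 * (2*(1-\<omega>\<^sup>2) + \<theta>p/\<tau>)"
    and q: "0 < q" "2*q \<le> \<mu>*h" "2*q \<le> \<mu>*a" "q \<le> \<mu>*(1-\<omega>\<^sup>2)/(2*\<omega>^3*L + \<mu>*(1-\<omega>\<^sup>2))"
      "q \<le> 1 - 1/\<tau>"
  shows "(norm (d - h *\<^sub>R G))\<^sup>2 + (\<omega>\<^sup>2/(1-\<omega>\<^sup>2) + \<mu>/(2*\<omega>*L)) * (norm (h *\<^sub>R G))\<^sup>2
           + 2*h*(1 + (h/a)/(2*(1-\<omega>\<^sup>2)))*Fx
         \<le> (1-q) * ((norm d)\<^sup>2 + (\<omega>\<^sup>2/(1-\<omega>\<^sup>2) + \<mu>/(2*\<omega>*L)) * (norm u)\<^sup>2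
           + 2*a*(1 + \<theta>p/(2*(1-\<omega>\<^sup>2)))*Fy)"
proof (cases "u = 0")
  case True
  have H0: "H = 0" using uH True a by simp
  have "Fy + \<mu>/2*(norm d)\<^sup>2 \<le> 0" and "0 \<le> \<mu>/2*(norm d)\<^sup>2" using strong_y True H0 mu by simp_all
  then have Fy_0: "Fy = 0" and "\<mu>/2*(norm d)\<^sup>2 = 0" using Fy0 by linarith+
  then have d0: "d = 0" using mu by simp
  have Fx: "Fx \<le> 0" using decrease True Fy_0 by simp
  have "h * norm G \<le> 0" using lip True H0 by simp
  then have G0: "G = 0" using h by (simp add: mult_le_0_iff)
  have "0 \<le> 2*h*(1 + (h/a)/(2*(1-\<omega>\<^sup>2)))" using a h om by simp
  then show ?thesis using d0 Fy_0 G0 True Fx by (simp add: mult_nonneg_nonpos)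
next
  case False
  define \<beta> where "\<beta> = 1 - \<omega>\<^sup>2"
  define c where "c = \<omega>\<^sup>2/\<beta> + \<mu>/(2*\<omega>*L)"
  define S where "S = (1-q)*c - (\<omega>\<^sup>2 - 3/2*(h/a)*(h*\<mu>))/\<beta>"
  have om1: "\<omega>\<^sup>2 < 1" using om by simp
  have modulus: "h*\<mu> \<le> \<omega>" by (rule step_modulus_le[OF False h mono lip])
  have "2*h*Fx + (h*\<mu> - (h*\<mu>)\<^sup>2/(2*\<omega>))*(norm d)\<^sup>2 + \<mu>/(2*\<omega>*L)*(norm (h *\<^sub>R G))\<^sup>2 \<le> 2*h*(G \<bullet> d)"
    using interpolated_descent[OF h om(1) L _ modulus strong_x smooth_x] h mu by simp
  from gradient_step_estimate[OF a h om1 uH this decrease mono lip]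
  have estimate: "(norm (d - h *\<^sub>R G))\<^sup>2 + c * (norm (h *\<^sub>R G))\<^sup>2 + 2*h*(1 + (h/a)/(2*\<beta>))*Fx
      \<le> (1 - (h*\<mu> - (h*\<mu>)\<^sup>2/(2*\<omega>)))*(norm d)\<^sup>2 + (\<omega>\<^sup>2 - 3/2*(h/a)*(h*\<mu>))/\<beta> * (norm u)\<^sup>2
         + h\<^sup>2/(a*\<beta>) * Fy"
    unfolding c_def \<beta>_def .
  have "3/2*(h/a)*(h*\<mu>)/(1-\<omega>\<^sup>2) \<le> S"
    using lyapunov_weight_bound[OF om(1) om1 mu L q(4)] unfolding S_def c_def \<beta>_def
    by (simp add: diff_divide_distrib)
  moreover have "Fy \<le> -(1/a)*(u \<bullet> (d - u)) - \<mu>/2*(norm (d - u))\<^sup>2"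
    using strong_y uH a by simp
  ultimately have remainder: "(h\<^sup>2/(a*\<beta>) - (1-q)*(2*a*(1 + \<theta>p/(2*\<beta>)))) * Fy
      \<le> (h*\<mu> - (h*\<mu>)\<^sup>2/(2*\<omega>) - q)*(norm d)\<^sup>2 + S*(norm u)\<^sup>2"
    using lyapunov_remainder_nonneg[OF a h mu om thp modulus Fy0 _ growth q(1-3,5)] unfolding \<beta>_def
    by blast
  have "(1-q) * ((norm d)\<^sup>2 + c * (norm u)\<^sup>2 + 2*a*(1 + \<theta>p/(2*\<beta>))*Fy)
      = (1 - (h*\<mu> - (h*\<mu>)\<^sup>2/(2*\<omega>)))*(norm d)\<^sup>2 + (\<omega>\<^sup>2 - 3/2*(h/a)*(h*\<mu>))/\<beta> * (norm u)\<^sup>2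
         + h\<^sup>2/(a*\<beta>) * Fy
       + ((h*\<mu> - (h*\<mu>)\<^sup>2/(2*\<omega>) - q)*(norm d)\<^sup>2 + S*(norm u)\<^sup>2
         - (h\<^sup>2/(a*\<beta>) - (1-q)*(2*a*(1 + \<theta>p/(2*\<beta>)))) * Fy)"
    unfolding S_def by (simp add: algebra_simps)
  then have "(norm (d - h *\<^sub>R G))\<^sup>2 + c * (norm (h *\<^sub>R G))\<^sup>2 + 2*h*(1 + (h/a)/(2*\<beta>))*Fx
      \<le> (1-q) * ((norm d)\<^sup>2 + c * (norm u)\<^sup>2 + 2*a*(1 + \<theta>p/(2*\<beta>))*Fy)"
    using estimate remainder by linarith
  then show ?thesis unfolding c_def \<beta>_def .
qed

section \<open>Gradients of convex functions\<close>

lemma has_real_derivative_on_line: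
  fixes f :: "'a::real_inner \<Rightarrow> real"
  assumes grad: "\<And>z. (f has_derivative (\<lambda>h. g z \<bullet> h)) (at z)"
  shows "((\<lambda>t. f (z + t *\<^sub>R (y - z))) has_real_derivative (g (z + t *\<^sub>R (y - z)) \<bullet> (y - z))) (at t)"
proof -
  have "((\<lambda>t. z + t *\<^sub>R (y - z)) has_derivative (\<lambda>r. r *\<^sub>R (y - z))) (at t)"
    by (intro derivative_eq_intros) auto
  then have "((\<lambda>t. f (z + t *\<^sub>R (y - z))) has_derivative (\<lambda>r. g (z + t *\<^sub>R (y - z)) \<bullet> (r *\<^sub>R (y - z)))) (at t)"
    by (rule has_derivative_compose) (rule grad)
  then show ?thesis unfolding has_field_derivative_def
    by (rule has_derivative_eq_rhs) (auto simp: fun_eq_iff mult.commute)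
qed

lemma convex_gradient_inequality:
  fixes f :: "'a::real_inner \<Rightarrow> real"
  assumes cvx: "convex_on UNIV f"
    and grad: "\<And>z. (f has_derivative (\<lambda>h. g z \<bullet> h)) (at z)"
  shows "f x + g x \<bullet> (y - x) \<le> f y"
proof -
  define \<phi> where "\<phi> t = f (x + t *\<^sub>R (y - x))" for t :: real
  have "convex_on UNIV \<phi>"
  proof (rule convex_onI)
    fix u t1 t2 :: real
    assume u: "0 < u" "u < 1"
    have "x + ((1 - u) * t1 + u * t2) *\<^sub>R (y - x)
        = (1 - u) *\<^sub>R (x + t1 *\<^sub>R (y - x)) + u *\<^sub>R (x + t2 *\<^sub>R (y - x))"
      by (simp add: algebra_simps)
    then show "\<phi> ((1 - u) *\<^sub>R t1 + u *\<^sub>R t2) \<le> (1 - u) * \<phi> t1 + u * \<phi> t2"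
      unfolding \<phi>_def using convex_onD[OF cvx, of u] u by simp
  qed simp
  moreover have "(\<phi> has_real_derivative (g x \<bullet> (y - x))) (at 0 within UNIV)"
    using has_real_derivative_on_line[OF grad, of x y 0] unfolding \<phi>_def by simp
  ultimately have "(g x \<bullet> (y - x)) * (1 - 0) \<le> \<phi> 1 - \<phi> 0"
    by (intro convex_on_imp_above_tangent) auto
  then show ?thesis unfolding \<phi>_def by simp
qed

lemma convex_gradient_monotone:
  fixes f :: "'a::real_inner \<Rightarrow> real"
  assumes cvx: "convex_on UNIV f"
    and grad: "\<And>z. (f has_derivative (\<lambda>h. g z \<bullet> h)) (at z)"
  shows "0 \<le> (g y - g z) \<bullet> (y - z)"
  using convex_gradient_inequality[OF cvx grad, of y z] convex_gradient_inequality[OF cvx grad, of z y]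
  by (simp add: inner_diff_left inner_diff_right)

lemma convex_line_point:
  assumes "convex W" "y \<in> W" "z \<in> W" "0 \<le> t" "t \<le> 1"
  shows "z + t *\<^sub>R (y - z) \<in> W"
proof -
  have "z + t *\<^sub>R (y - z) = (1 - t) *\<^sub>R z + t *\<^sub>R y" by (simp add: algebra_simps)
  then show ?thesis using convexD_alt[OF assms(1,3,2,4,5)] by simp
qed

lemma quadratic_lower_bound_on_segment:
  fixes f :: "'a::real_inner \<Rightarrow> real"
  assumes grad: "\<And>z. (f has_derivative (\<lambda>h. g z \<bullet> h)) (at z)"
    and slope: "\<And>t. 0 \<le> t \<Longrightarrow> t \<le> 1 \<Longrightarrow>
      c * t * (norm (y - z))\<^sup>2 \<le> (g (z + t *\<^sub>R (y - z)) - g z) \<bullet> (y - z)"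
  shows "f z + g z \<bullet> (y - z) + c/2 * (norm (y - z))\<^sup>2 \<le> f y"
proof -
  define \<phi> where "\<phi> t = f (z + t *\<^sub>R (y - z)) - t * (g z \<bullet> (y - z)) - c/2 * t\<^sup>2 * (norm (y - z))\<^sup>2"
    for t :: real
  have "\<phi> 0 \<le> \<phi> 1"
  proof (rule DERIV_nonneg_imp_nondecreasing[of 0 1])
    fix t :: real assume t: "0 \<le> t" "t \<le> 1"
    have "(\<phi> has_real_derivative
        (g (z + t *\<^sub>R (y - z)) \<bullet> (y - z) - g z \<bullet> (y - z) - c * t * (norm (y - z))\<^sup>2)) (at t)"
      unfolding \<phi>_def by (rule derivative_eq_intros has_real_derivative_on_line[OF grad] | simp)+
    moreover have "0 \<le> g (z + t *\<^sub>R (y - z)) \<bullet> (y - z) - g z \<bullet> (y - z) - c * t * (norm (y - z))\<^sup>2"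
      using slope[OF t] by (simp add: inner_diff_left)
    ultimately show "\<exists>D. (\<phi> has_real_derivative D) (at t) \<and> 0 \<le> D" by blast
  qed simp
  then show ?thesis unfolding \<phi>_def by simp
qed

lemma strong_convexity_of_strongly_monotone_gradient:
  fixes f :: "'a::real_inner \<Rightarrow> real"
  assumes grad: "\<And>z. (f has_derivative (\<lambda>h. g z \<bullet> h)) (at z)"
    and W: "convex W" and y: "y \<in> W" and z: "z \<in> W"
    and mono: "\<And>p q. p \<in> W \<Longrightarrow> q \<in> W \<Longrightarrow> \<mu> * (norm (p - q))\<^sup>2 \<le> (g p - g q) \<bullet> (p - q)"
  shows "f z + g z \<bullet> (y - z) + \<mu>/2 * (norm (y - z))\<^sup>2 \<le> f y"
proof (rule quadratic_lower_bound_on_segment[OF grad])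
  fix t :: real assume t: "0 \<le> t" "t \<le> 1"
  define p where "p = z + t *\<^sub>R (y - z)"
  have "\<mu> * (norm (p - z))\<^sup>2 \<le> (g p - g z) \<bullet> (p - z)"
    unfolding p_def by (rule mono[OF convex_line_point[OF W y z t] z])
  moreover have "\<mu> * (norm (p - z))\<^sup>2 = t * (\<mu> * t * (norm (y - z))\<^sup>2)"
    unfolding p_def using t by (simp add: power_mult_distrib power2_eq_square)
  moreover have "(g p - g z) \<bullet> (p - z) = t * ((g p - g z) \<bullet> (y - z))" unfolding p_def by simp
  ultimately have "t * (\<mu> * t * (norm (y - z))\<^sup>2) \<le> t * ((g p - g z) \<bullet> (y - z))" by simp
  then show "\<mu> * t * (norm (y - z))\<^sup>2 \<le> (g (z + t *\<^sub>R (y - z)) - g z) \<bullet> (y - z)"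
    unfolding p_def using t by (cases "t = 0") auto
qed

lemma descent_of_lipschitz_gradient:
  fixes f :: "'a::real_inner \<Rightarrow> real"
  assumes grad: "\<And>z. (f has_derivative (\<lambda>h. g z \<bullet> h)) (at z)"
    and W: "convex W" and y: "y \<in> W" and z: "z \<in> W"
    and lip: "\<And>p q. p \<in> W \<Longrightarrow> q \<in> W \<Longrightarrow> norm (g p - g q) \<le> L * norm (p - q)"
  shows "f y \<le> f z + g z \<bullet> (y - z) + L/2 * (norm (y - z))\<^sup>2"
proof -
  have grad': "((\<lambda>x. - f x) has_derivative (\<lambda>h. (- g z) \<bullet> h)) (at z)" for z
    using has_derivative_minus[OF grad] by simp
  have "- f z + (- g z) \<bullet> (y - z) + (- L)/2 * (norm (y - z))\<^sup>2 \<le> - f y"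
  proof (rule quadratic_lower_bound_on_segment[OF grad'])
    fix t :: real assume t: "0 \<le> t" "t \<le> 1"
    have "(g (z + t *\<^sub>R (y - z)) - g z) \<bullet> (y - z) \<le> norm (g (z + t *\<^sub>R (y - z)) - g z) * norm (y - z)"
      by (rule norm_cauchy_schwarz)
    also have "\<dots> \<le> L * norm (t *\<^sub>R (y - z)) * norm (y - z)"
      using lip[OF convex_line_point[OF W y z t] z] by (intro mult_right_mono) auto
    also have "\<dots> = L * t * (norm (y - z))\<^sup>2" using t by (simp add: power2_eq_square)
    finally show "- L * t * (norm (y - z))\<^sup>2 \<le> (- g (z + t *\<^sub>R (y - z)) - - g z) \<bullet> (y - z)"
      by (simp add: inner_diff_left)
  qed
  then show ?thesis by simp
qed

lemma gradient_zero_at_minimizer: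
  fixes f :: "'a::real_inner \<Rightarrow> real"
  assumes grad: "\<And>z. (f has_derivative (\<lambda>h. g z \<bullet> h)) (at z)"
    and min: "\<And>y. f xs \<le> f y"
  shows "g xs = 0"
proof -
  have "(\<lambda>h. g xs \<bullet> h) = (\<lambda>h. 0)"
    by (rule has_derivative_local_min[OF grad]) (simp add: min always_eventually)
  then have "g xs \<bullet> g xs = 0" by metis
  then show ?thesis by simp
qed

lemma argmin_set_eq_singleton:
  fixes f :: "'a::real_inner \<Rightarrow> real"
  assumes cvx: "convex_on UNIV f"
    and grad: "\<And>z. (f has_derivative (\<lambda>h. g z \<bullet> h)) (at z)"
    and lsc: "locally_strongly_convex f g"
    and xs: "xs \<in> argmin_set f"
  shows "argmin_set f = {xs}"
proof -
  have min: "\<And>y. f xs \<le> f y" using xs unfolding argmin_set_def by auto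
  have g0: "g xs = 0" by (rule gradient_zero_at_minimizer[OF grad min])
  obtain \<delta> \<mu> where \<delta>: "\<delta> > 0" and \<mu>: "\<mu> > 0" and loc: "\<forall>p\<in>ball xs \<delta>. \<forall>r\<in>ball xs \<delta>.
      f p \<ge> f r + g r \<bullet> (p - r) + \<mu> / 2 * (norm (p - r))\<^sup>2"
    using lsc unfolding locally_strongly_convex_def by blast
  have "y = xs" if y: "y \<in> argmin_set f" for y
  proof (rule ccontr)
    assume ne: "y \<noteq> xs"
    define t where "t = min (1/2) (\<delta> / (2 * norm (y - xs)))"
    define p where "p = xs + t *\<^sub>R (y - xs)"
    have t: "0 < t" "t \<le> 1" using \<delta> ne unfolding t_def by auto
    have np: "norm (p - xs) = t * norm (y - xs)" unfolding p_def using t by simp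
    also have "\<dots> \<le> \<delta>/2"
    proof -
      have "t \<le> \<delta> / (2 * norm (y - xs))" unfolding t_def by simp
      then show ?thesis using ne by (simp add: pos_le_divide_eq)
    qed
    finally have "p \<in> ball xs \<delta>" using \<delta> by (simp add: dist_norm norm_minus_commute)
    moreover have "xs \<in> ball xs \<delta>" using \<delta> by simp
    ultimately have "f xs + g xs \<bullet> (p - xs) + \<mu> / 2 * (norm (p - xs))\<^sup>2 \<le> f p" using loc by blast
    then have "f xs + \<mu> / 2 * (t * norm (y - xs))\<^sup>2 \<le> f p" using g0 np by simp
    moreover have "f p \<le> (1 - t) * f xs + t * f y"
      using convex_onD[OF cvx, of t xs y] t unfolding p_def by (simp add: algebra_simps)
    moreover have "f y = f xs" using y min unfolding argmin_set_def by (auto intro: antisym)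
    moreover have "0 < \<mu> / 2 * (t * norm (y - xs))\<^sup>2" using \<mu> t ne by simp
    ultimately show False by (simp add: algebra_simps)
  qed
  then show ?thesis using xs by blast
qed

lemma locally_strongly_monotone:
  assumes "locally_strongly_convex f g"
  shows "\<exists>\<delta>>0. \<exists>\<mu>>0. \<forall>y\<in>ball x \<delta>. \<forall>z\<in>ball x \<delta>. \<mu> * (norm (y - z))\<^sup>2 \<le> (g y - g z) \<bullet> (y - z)"
proof -
  obtain \<delta> \<mu> where "\<delta> > 0" "\<mu> > 0" and sc: "\<forall>y\<in>ball x \<delta>. \<forall>z\<in>ball x \<delta>.
      f y \<ge> f z + g z \<bullet> (y - z) + \<mu> / 2 * (norm (y - z))\<^sup>2"
    using assms unfolding locally_strongly_convex_def by blast
  have "\<mu> * (norm (y - z))\<^sup>2 \<le> (g y - g z) \<bullet> (y - z)" if "y \<in> ball x \<delta>" "z \<in> ball x \<delta>" for y z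
  proof -
    have "f z + g z \<bullet> (y - z) + \<mu> / 2 * (norm (y - z))\<^sup>2 \<le> f y"
      and "f y + g y \<bullet> (z - y) + \<mu> / 2 * (norm (z - y))\<^sup>2 \<le> f z" using sc that by blast+
    moreover have "g y \<bullet> (z - y) = - (g y \<bullet> (y - z))" by (simp add: inner_diff_right)
    ultimately show ?thesis by (simp add: inner_diff_left norm_minus_commute)
  qed
  then show ?thesis using \<open>\<delta> > 0\<close> \<open>\<mu> > 0\<close> by blast
qed

lemma strongly_monotone_near_compact:
  fixes g :: "'a::real_inner \<Rightarrow> 'a"
  assumes W: "compact W"
    and local: "\<And>x. \<exists>\<delta>>0. \<exists>\<mu>>0. \<forall>y\<in>ball x \<delta>. \<forall>z\<in>ball x \<delta>. \<mu> * (norm (y - z))\<^sup>2 \<le> (g y - g z) \<bullet> (y - z)"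
  obtains \<delta> \<mu> where "0 < \<delta>" "0 < \<mu>"
    "\<And>p q. p \<in> W \<Longrightarrow> norm (p - q) < \<delta> \<Longrightarrow> \<mu> * (norm (p - q))\<^sup>2 \<le> (g p - g q) \<bullet> (p - q)"
proof -
  have "\<exists>D. \<forall>x. 0 < D x \<and> (\<exists>\<mu>>0. \<forall>y\<in>ball x (D x). \<forall>z\<in>ball x (D x).
      \<mu> * (norm (y - z))\<^sup>2 \<le> (g y - g z) \<bullet> (y - z))"
    by (rule choice) (use local in blast)
  then obtain D where D: "\<And>x. 0 < D x" "\<And>x. \<exists>\<mu>>0. \<forall>y\<in>ball x (D x). \<forall>z\<in>ball x (D x).
      \<mu> * (norm (y - z))\<^sup>2 \<le> (g y - g z) \<bullet> (y - z)"
    by blast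
  have "\<exists>M. \<forall>x. 0 < M x \<and> (\<forall>y\<in>ball x (D x). \<forall>z\<in>ball x (D x).
      M x * (norm (y - z))\<^sup>2 \<le> (g y - g z) \<bullet> (y - z))"
    by (rule choice) (use D(2) in blast)
  then obtain M where M: "\<And>x. 0 < M x" "\<And>x y z. y \<in> ball x (D x) \<Longrightarrow> z \<in> ball x (D x) \<Longrightarrow>
      M x * (norm (y - z))\<^sup>2 \<le> (g y - g z) \<bullet> (y - z)"
    by blast
  have "W \<subseteq> (\<Union>c\<in>W. ball c (D c / 2))" using D(1) by auto
  then obtain C where C: "C \<subseteq> W" "finite C" "W \<subseteq> (\<Union>c\<in>C. ball c (D c / 2))"
    using compactE_image[OF W, of W "\<lambda>c. ball c (D c / 2)"] by auto
  \<comment> \<open>the extra \<open>1\<close> only keeps both minima meaningful when \<open>C = {}\<close>\<close>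
  define \<delta> where "\<delta> = Min (insert 1 ((\<lambda>c. D c / 2) ` C))"
  define \<mu> where "\<mu> = Min (insert 1 (M ` C))"
  have "0 < \<delta>" "0 < \<mu>" unfolding \<delta>_def \<mu>_def using C D(1) M(1) by (auto simp: Min_gr_iff)
  moreover have "\<mu> * (norm (p - q))\<^sup>2 \<le> (g p - g q) \<bullet> (p - q)" if "p \<in> W" "norm (p - q) < \<delta>" for p q
  proof -
    obtain c where c: "c \<in> C" "p \<in> ball c (D c / 2)" using C(3) \<open>p \<in> W\<close> by blast
    have "\<mu> \<le> M c" unfolding \<mu>_def by (rule Min_le) (use C(2) c(1) in auto)
    have "\<delta> \<le> D c / 2" unfolding \<delta>_def by (rule Min_le) (use C(2) c(1) in auto)
    then have "p \<in> ball c (D c)" "q \<in> ball c (D c)"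
      using c that dist_triangle[of c q p] D(1)[of c] by (auto simp: dist_norm)
    then have "M c * (norm (p - q))\<^sup>2 \<le> (g p - g q) \<bullet> (p - q)" by (rule M(2))
    moreover have "\<mu> * (norm (p - q))\<^sup>2 \<le> M c * (norm (p - q))\<^sup>2"
      using \<open>\<mu> \<le> M c\<close> by (intro mult_right_mono) auto
    ultimately show ?thesis by linarith
  qed
  ultimately show ?thesis using that by blast
qed

lemma strongly_monotone_on_convex_of_near:
  fixes g :: "'a::real_inner \<Rightarrow> 'a"
  assumes W: "convex W" and \<delta>: "0 < \<delta>"
    and near: "\<And>p q. p \<in> W \<Longrightarrow> q \<in> W \<Longrightarrow> norm (p - q) < \<delta> \<Longrightarrow>
      \<mu> * (norm (p - q))\<^sup>2 \<le> (g p - g q) \<bullet> (p - q)"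
    and y: "y \<in> W" and z: "z \<in> W"
  shows "\<mu> * (norm (y - z))\<^sup>2 \<le> (g y - g z) \<bullet> (y - z)"
proof -
  \<comment> \<open>split the segment from \<open>z\<close> to \<open>y\<close> into \<open>N\<close> pieces shorter than \<open>\<delta>\<close> and telescope\<close>
  obtain N :: nat where N: "norm (y - z) / \<delta> < real N" using reals_Archimedean2 by blast
  then have N0: "0 < N" using \<delta> by (cases N) (auto simp: divide_less_0_iff)
  define p where "p i = z + (real i / real N) *\<^sub>R (y - z)" for i
  have step: "p (Suc i) - p i = (1 / real N) *\<^sub>R (y - z)" for i
    unfolding p_def by (simp add: scaleR_diff_left[symmetric] diff_divide_distrib[symmetric])
  have piece: "\<mu> * (norm (y - z))\<^sup>2 / real N \<le> (g (p (Suc i)) - g (p i)) \<bullet> (y - z)" if "i < N" for i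
  proof -
    have "p (Suc i) \<in> W" "p i \<in> W"
      unfolding p_def using that N0 by (auto intro!: convex_line_point[OF W y z])
    moreover have "norm (p (Suc i) - p i) < \<delta>"
    proof -
      have "norm (p (Suc i) - p i) = norm (y - z) / real N" unfolding step by simp
      also have "\<dots> < \<delta>" using N N0 \<delta> by (simp add: divide_less_eq mult.commute)
      finally show ?thesis .
    qed
    ultimately have "\<mu> * (norm (p (Suc i) - p i))\<^sup>2 \<le> (g (p (Suc i)) - g (p i)) \<bullet> (p (Suc i) - p i)"
      by (rule near)
    moreover have "(norm (p (Suc i) - p i))\<^sup>2 = (norm (y - z))\<^sup>2 / (real N)\<^sup>2"
      unfolding step norm_scaleR by (simp add: power_mult_distrib power_divide)
    moreover have "(g (p (Suc i)) - g (p i)) \<bullet> (p (Suc i) - p i) = (g (p (Suc i)) - g (p i)) \<bullet> (y - z) / real N"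
      unfolding step by simp
    ultimately have "\<mu> * ((norm (y - z))\<^sup>2 / (real N)\<^sup>2) \<le> (g (p (Suc i)) - g (p i)) \<bullet> (y - z) / real N"
      by simp
    then have "real N * (\<mu> * ((norm (y - z))\<^sup>2 / (real N)\<^sup>2))
        \<le> real N * ((g (p (Suc i)) - g (p i)) \<bullet> (y - z) / real N)"
      by (rule mult_left_mono) simp
    then show ?thesis using N0 by (simp add: power2_eq_square field_simps)
  qed
  have "(g y - g z) \<bullet> (y - z) = (\<Sum>i<N. (g (p (Suc i)) - g (p i)) \<bullet> (y - z))"
    using sum_lessThan_telescope[of "\<lambda>i. g (p i)" N] N0 unfolding p_def
    by (simp add: inner_sum_left[symmetric])
  also have "\<dots> \<ge> (\<Sum>i<N. \<mu> * (norm (y - z))\<^sup>2 / real N)" by (rule sum_mono) (use piece in auto)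
  also have "(\<Sum>i<N. \<mu> * (norm (y - z))\<^sup>2 / real N) = \<mu> * (norm (y - z))\<^sup>2" using N0 by simp
  finally show ?thesis .
qed

lemma strongly_monotone_on_compact_convex:
  fixes g :: "'a::real_inner \<Rightarrow> 'a"
  assumes lsc: "locally_strongly_convex f g" and W: "compact W" "convex W"
  obtains \<mu> where "0 < \<mu>" "\<And>y z. y \<in> W \<Longrightarrow> z \<in> W \<Longrightarrow> \<mu> * (norm (y - z))\<^sup>2 \<le> (g y - g z) \<bullet> (y - z)"
proof -
  obtain \<delta> \<mu> where "0 < \<delta>" "0 < \<mu>"
    and "\<And>p q. p \<in> W \<Longrightarrow> norm (p - q) < \<delta> \<Longrightarrow> \<mu> * (norm (p - q))\<^sup>2 \<le> (g p - g q) \<bullet> (p - q)"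
    using strongly_monotone_near_compact[OF W(1) locally_strongly_monotone[OF lsc]] by blast
  then show ?thesis using strongly_monotone_on_convex_of_near[OF W(2)] that by blast
qed

section \<open>The adaptive gradient iteration\<close>

locale adaptive_gradient =
  fixes f :: "'a::real_inner \<Rightarrow> real" and g :: "'a \<Rightarrow> 'a" and xstar :: 'a
    and x :: "nat \<Rightarrow> 'a" and \<alpha> \<theta> \<gamma> :: "nat \<Rightarrow> real" and \<tau> \<omega> :: real
  assumes convex: "convex_on UNIV f"
    and gradient: "\<And>z. (f has_derivative (\<lambda>h. g z \<bullet> h)) (at z)"
    and minimizer: "\<And>y. f xstar \<le> f y"
    and alpha0_pos: "0 < \<alpha> 0" and theta0_pos: "0 < \<theta> 0" and tau_gt_1: "1 < \<tau>"
    and omega_pos: "0 < \<omega>" and omega_sq_le: "\<omega>\<^sup>2 \<le> 1/2"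
    and gamma_pos: "\<And>k. 0 < \<gamma> k"
    and iteration: "\<And>k. x (Suc k) = x k - (\<alpha> k * \<gamma> k) *\<^sub>R g (x k)"
    and step_rule: "\<And>k. k \<ge> 1 \<Longrightarrow>
       (let Lk = norm (g (x k) - g (x (k - 1))) / norm (x k - x (k - 1));
            A = \<alpha> (k - 1) * \<gamma> (k - 1) / \<gamma> k * sqrt (2 * (1 - \<omega>\<^sup>2) + \<theta> (k - 1) / \<tau>)
        in \<alpha> k = (if Lk = 0 then A else min A (\<omega> / (\<gamma> k * Lk))))"
    and theta_rule: "\<And>k. k \<ge> 1 \<Longrightarrow> \<theta> k = \<alpha> k * \<gamma> k / (\<alpha> (k - 1) * \<gamma> (k - 1))"
begin

definition ag :: "nat \<Rightarrow> real" where "ag k = \<alpha> k * \<gamma> k"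

definition Lk :: "nat \<Rightarrow> real" where
  "Lk k = norm (g (x k) - g (x (k - 1))) / norm (x k - x (k - 1))"

definition energy :: "nat \<Rightarrow> real" where
  "energy k = (norm (x (Suc k) - xstar))\<^sup>2 + \<omega>\<^sup>2/(1-\<omega>\<^sup>2) * (norm (x (Suc k) - x k))\<^sup>2
     + 2*ag k*(1 + \<theta> k/(2*(1-\<omega>\<^sup>2)))*(f (x k) - f xstar)"

definition \<eta> :: real where
  "\<eta> = (norm (x 0 - xstar))\<^sup>2 + 2*(ag 0)\<^sup>2*(norm (g (x 0)))\<^sup>2 + 2*ag 0*\<theta> 0*(f (x 0) - f xstar)"

lemma omega_sq_lt_1: "\<omega>\<^sup>2 < 1"
  using omega_sq_le by simp

lemma iteration_ag: "x (Suc k) = x k - ag k *\<^sub>R g (x k)"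
  using iteration unfolding ag_def .

lemma gradient_at_minimizer: "g xstar = 0"
  by (rule gradient_zero_at_minimizer[OF gradient minimizer])

lemma optimality_gap_le: "f y - f xstar \<le> g y \<bullet> (y - xstar)"
  using convex_gradient_inequality[OF convex gradient, of y xstar] by (simp add: inner_diff_right)

lemma Lk_nonneg: "0 \<le> Lk k"
  unfolding Lk_def by simp

lemma step_rule_ag:
  assumes k: "k \<ge> 1"
  shows "ag k = (if Lk k = 0 then ag (k - 1) * sqrt (2*(1-\<omega>\<^sup>2) + \<theta> (k - 1)/\<tau>)
                 else min (ag (k - 1) * sqrt (2*(1-\<omega>\<^sup>2) + \<theta> (k - 1)/\<tau>)) (\<omega> / Lk k))"
  using step_rule[OF k] gamma_pos[of k] unfolding ag_def Lk_def Let_def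
  by (auto simp: min_mult_distrib_right)

lemma ag_theta_pos: "0 < ag k \<and> 0 < \<theta> k"
proof (induction k)
  case 0
  show ?case using alpha0_pos theta0_pos gamma_pos[of 0] by (simp add: ag_def)
next
  case (Suc k)
  have "0 < ag k * sqrt (2*(1-\<omega>\<^sup>2) + \<theta> k/\<tau>)"
    using Suc omega_sq_lt_1 tau_gt_1 by (intro mult_pos_pos real_sqrt_gt_zero add_pos_pos divide_pos_pos) auto
  moreover have "0 < \<omega> / Lk (Suc k)" if "Lk (Suc k) \<noteq> 0"
    using that Lk_nonneg[of "Suc k"] omega_pos by simp
  ultimately have "0 < ag (Suc k)" using step_rule_ag[of "Suc k"] by auto
  moreover have "\<theta> (Suc k) = ag (Suc k) / ag k" using theta_rule[of "Suc k"] by (simp add: ag_def)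
  ultimately show ?case using Suc by simp
qed

lemma ag_pos: "0 < ag k" and theta_pos: "0 < \<theta> k"
  using ag_theta_pos by auto

lemma theta_ag: "k \<ge> 1 \<Longrightarrow> \<theta> k = ag k / ag (k - 1)"
  using theta_rule unfolding ag_def by simp

lemma ag_growth:
  assumes k: "k \<ge> 1"
  shows "(ag k)\<^sup>2 \<le> (ag (k - 1))\<^sup>2 * (2*(1-\<omega>\<^sup>2) + \<theta> (k - 1)/\<tau>)"
proof -
  have r: "0 \<le> 2*(1-\<omega>\<^sup>2) + \<theta> (k - 1)/\<tau>"
    using omega_sq_lt_1 theta_pos[of "k - 1"] tau_gt_1 by (simp add: add_nonneg_nonneg)
  have "ag k \<le> ag (k - 1) * sqrt (2*(1-\<omega>\<^sup>2) + \<theta> (k - 1)/\<tau>)"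
    using step_rule_ag[OF k] by (auto simp: min_le_iff_disj)
  then have "(ag k)\<^sup>2 \<le> (ag (k - 1) * sqrt (2*(1-\<omega>\<^sup>2) + \<theta> (k - 1)/\<tau>))\<^sup>2"
    using ag_pos[of k] by (intro power_mono) auto
  then show ?thesis using r by (simp add: power_mult_distrib)
qed

lemma ag_local_lipschitz:
  assumes k: "k \<ge> 1"
  shows "ag k * norm (g (x k) - g (x (k - 1))) \<le> \<omega> * norm (x k - x (k - 1))"
proof (cases "Lk k = 0")
  case True
  then have "g (x k) - g (x (k - 1)) = 0" unfolding Lk_def by (cases "x k = x (k - 1)") auto
  then show ?thesis using omega_pos by simp
next
  case False
  then have pos: "0 < norm (x k - x (k - 1))" "0 < Lk k"
    using Lk_nonneg[of k] unfolding Lk_def by auto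
  have "ag k \<le> \<omega> / Lk k" using step_rule_ag[OF k] False by simp
  then have "ag k * Lk k \<le> \<omega>" using pos by (simp add: le_divide_eq)
  then have "ag k * Lk k * norm (x k - x (k - 1)) \<le> \<omega> * norm (x k - x (k - 1))"
    using pos by (intro mult_right_mono) auto
  moreover have "Lk k * norm (x k - x (k - 1)) = norm (g (x k) - g (x (k - 1)))"
    using pos unfolding Lk_def by simp
  ultimately show ?thesis by (simp add: mult.assoc)
qed

lemma energy_initial: "energy 0 \<le> \<eta>"
proof -
  define d G h F where "d = x 0 - xstar" and "G = g (x 0)" and "h = ag 0" and "F = f (x 0) - f xstar"
  define A B where "A = h\<^sup>2*(norm G)\<^sup>2" and "B = h*F"
  have h: "0 < h" unfolding h_def by (rule ag_pos)
  have F: "0 \<le> F" unfolding F_def using minimizer by simp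
  have "\<omega>\<^sup>2/(1-\<omega>\<^sup>2) * A \<le> 1 * A"
    unfolding A_def using omega_sq_le by (intro mult_right_mono) (auto simp: divide_le_eq)
  moreover have "\<theta> 0/(1-\<omega>\<^sup>2) * B \<le> (2*\<theta> 0) * B"
    unfolding B_def using omega_sq_le theta0_pos h F by (intro mult_right_mono) (auto simp: divide_le_eq)
  moreover have "2*B \<le> 2*(h*(G \<bullet> d))"
    unfolding B_def F_def G_def d_def using optimality_gap_le[of "x 0"] h by simp
  moreover have "energy 0 = (norm d)\<^sup>2 - 2*(h*(G \<bullet> d)) + A + \<omega>\<^sup>2/(1-\<omega>\<^sup>2) * A + 2*B + \<theta> 0/(1-\<omega>\<^sup>2) * B"
  proof -
    define \<beta> where "\<beta> = 1 - \<omega>\<^sup>2"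
    have b0: "0 < \<beta>" unfolding \<beta>_def using omega_sq_lt_1 by simp
    have x1: "x (Suc 0) - xstar = d - h *\<^sub>R G" and x2: "norm (x (Suc 0) - x 0) = norm (h *\<^sub>R G)"
      unfolding d_def h_def G_def iteration_ag by (simp_all add: algebra_simps)
    have dG: "(norm (d - h *\<^sub>R G))\<^sup>2 = (norm d)\<^sup>2 - 2*(h*(G \<bullet> d)) + A"
      unfolding A_def power2_norm_eq_inner
      by (simp add: inner_diff_left inner_diff_right inner_commute power2_eq_square algebra_simps)
    have "energy 0 = (norm (d - h *\<^sub>R G))\<^sup>2 + \<omega>\<^sup>2/\<beta> * A + 2*h*(1 + \<theta> 0/(2*\<beta>))*F"
      unfolding energy_def \<beta>_def x1 x2 A_def h_def F_def by (simp add: power_mult_distrib)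
    also have "\<dots> = (norm d)\<^sup>2 - 2*(h*(G \<bullet> d)) + A + \<omega>\<^sup>2/\<beta> * A + 2*B + \<theta> 0/\<beta> * B"
      unfolding dG B_def using b0 by (simp add: field_simps)
    finally show ?thesis unfolding \<beta>_def .
  qed
  moreover have "\<eta> = (norm d)\<^sup>2 + 2*A + (2*\<theta> 0)*B"
    unfolding \<eta>_def A_def B_def d_def G_def h_def F_def by (simp add: algebra_simps)
  ultimately show ?thesis by linarith
qed

lemma energy_decreasing:
  assumes k: "k \<ge> 1"
  shows "energy k \<le> energy (k - 1)"
proof -
  define d u G H where "d = x k - xstar" and "u = x k - x (k - 1)" and "G = g (x k)" and "H = g (x (k - 1))"
  define a h Fx Fy where "a = ag (k - 1)" and "h = ag k"
    and "Fx = f (x k) - f xstar" and "Fy = f (x (k - 1)) - f xstar"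
  have Sk: "Suc (k - 1) = k" using k by simp
  have a: "0 < a" and h: "0 < h" and Fy: "0 \<le> Fy" unfolding a_def h_def Fy_def using ag_pos minimizer by auto
  have uH: "u = - (a *\<^sub>R H)" using iteration_ag[of "k - 1"] unfolding u_def a_def H_def Sk by simp
  have descent: "2*h*Fx + 0*(norm d)\<^sup>2 + 0*(norm (h *\<^sub>R G))\<^sup>2 \<le> 2*h*(G \<bullet> d)"
    using optimality_gap_le[of "x k"] h unfolding Fx_def G_def d_def by simp
  have decrease: "- (G \<bullet> u) + 0/2*(norm u)\<^sup>2 \<le> Fy - Fx"
    using convex_gradient_inequality[OF convex gradient, of "x k" "x (k - 1)"]
    unfolding G_def u_def Fx_def Fy_def by (simp add: inner_diff_right)
  have mono: "0*(norm u)\<^sup>2 \<le> (G - H) \<bullet> u"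
    using convex_gradient_monotone[OF convex gradient] unfolding G_def H_def u_def by simp
  have lip: "h * norm (G - H) \<le> \<omega> * norm u"
    using ag_local_lipschitz[OF k] unfolding h_def G_def H_def u_def .
  have "energy k = (norm (d - h *\<^sub>R G))\<^sup>2 + (\<omega>\<^sup>2/(1-\<omega>\<^sup>2) + 0) * (norm (h *\<^sub>R G))\<^sup>2
      + 2*h*(1 + (h/a)/(2*(1-\<omega>\<^sup>2)))*Fx"
  proof -
    have "x (Suc k) - xstar = d - h *\<^sub>R G" "norm (x (Suc k) - x k) = norm (h *\<^sub>R G)"
      unfolding d_def h_def G_def iteration_ag by (simp_all add: algebra_simps)
    then show ?thesis unfolding energy_def theta_ag[OF k] h_def a_def Fx_def by simp
  qed
  also have "\<dots> \<le> (1 - 0)*(norm d)\<^sup>2 + (\<omega>\<^sup>2 - 3/2*(h/a)*(h*0))/(1-\<omega>\<^sup>2) * (norm u)\<^sup>2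
      + h\<^sup>2/(a*(1-\<omega>\<^sup>2)) * Fy"
    by (rule gradient_step_estimate[OF a h omega_sq_lt_1 uH descent decrease mono lip])
  also have "\<dots> \<le> energy (k - 1)"
  proof -
    have "0 \<le> 1 - 1/\<tau>" using tau_gt_1 by simp
    from stepsize_excess_le[OF a omega_sq_lt_1 _ this] ag_growth[OF k] theta_pos
    have "h\<^sup>2/(a*(1-\<omega>\<^sup>2)) \<le> 2*a*(1 + \<theta> (k - 1)/(2*(1-\<omega>\<^sup>2)))"
      unfolding a_def h_def by (simp add: less_imp_le)
    then have "h\<^sup>2/(a*(1-\<omega>\<^sup>2)) * Fy \<le> 2*a*(1 + \<theta> (k - 1)/(2*(1-\<omega>\<^sup>2))) * Fy"
      using Fy by (rule mult_right_mono)
    moreover have "energy (k - 1) = (norm d)\<^sup>2 + \<omega>\<^sup>2/(1-\<omega>\<^sup>2) * (norm u)\<^sup>2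
        + 2*a*(1 + \<theta> (k - 1)/(2*(1-\<omega>\<^sup>2)))*Fy"
      unfolding energy_def Sk d_def u_def a_def Fy_def ..
    ultimately show ?thesis by simp
  qed
  finally show ?thesis .
qed

lemma energy_le_eta: "energy k \<le> \<eta>"
proof (induction k)
  case 0
  show ?case by (rule energy_initial)
next
  case (Suc k)
  then show ?case using energy_decreasing[of "Suc k"] by simp
qed

lemma dist_iterate_sq_le: "(norm (x k - xstar))\<^sup>2 \<le> \<eta>"
proof (cases k)
  case 0
  have "0 \<le> 2*ag 0*\<theta> 0*(f (x 0) - f xstar)"
    using ag_pos[of 0] theta_pos[of 0] minimizer by simp
  then show ?thesis unfolding 0 \<eta>_def by simp
next
  case (Suc j)
  have "0 \<le> \<omega>\<^sup>2/(1-\<omega>\<^sup>2) * (norm (x (Suc j) - x j))\<^sup>2" using omega_sq_lt_1 by simp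
  moreover have "0 \<le> 2*ag j*(1 + \<theta> j/(2*(1-\<omega>\<^sup>2)))*(f (x j) - f xstar)"
    using ag_pos[of j] theta_pos[of j] omega_sq_lt_1 minimizer by simp
  ultimately have "(norm (x k - xstar))\<^sup>2 \<le> energy j" unfolding Suc energy_def by linarith
  then show ?thesis using energy_le_eta[of j] by linarith
qed

lemma eta_nonneg: "0 \<le> \<eta>"
  using dist_iterate_sq_le[of 0] by (meson order_trans zero_le_power2)

lemma dist_iterate_le: "norm (x k - xstar) \<le> sqrt \<eta>"
  using dist_iterate_sq_le[of k] by (simp add: real_le_rsqrt)

end

section \<open>Linear convergence on the ball \<open>W\<close>\<close>

locale adaptive_gradient_on_ball = adaptive_gradient f g xstar x \<alpha> \<theta> \<gamma> \<tau> \<omega>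
  for f :: "'a::euclidean_space \<Rightarrow> real" and g xstar x \<alpha> \<theta> \<gamma> \<tau> \<omega> +
  fixes R LW :: real
  assumes local_strong_convexity: "locally_strongly_convex f g"
    and radius: "3 * sqrt \<eta> + norm (x 0 - xstar) + norm (x 0) < R"
    and LW_pos: "0 < LW"
    and LW_lipschitz: "\<And>y z. y \<in> cball 0 R \<Longrightarrow> z \<in> cball 0 R \<Longrightarrow> norm (g y - g z) \<le> LW * norm (y - z)"
begin

definition monotonicity_quotients :: "real set" where
  "monotonicity_quotients =
     {(g y - g z) \<bullet> (y - z) / (norm (y - z))\<^sup>2 | y z. y \<in> cball 0 R \<and> z \<in> cball 0 R \<and> y \<noteq> z}"

definition \<mu>W :: real where "\<mu>W = Inf monotonicity_quotients"

definition lyapunov :: "nat \<Rightarrow> real" where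
  "lyapunov k = (norm (x (Suc k) - xstar))\<^sup>2
     + (\<omega>\<^sup>2 / (1 - \<omega>\<^sup>2) + \<mu>W / (2 * \<omega> * LW)) * (norm (x (Suc k) - x k))\<^sup>2
     + 2 * \<alpha> k * \<gamma> k * (1 + \<theta> k / (2 * (1 - \<omega>\<^sup>2))) * (f (x k) - f xstar)"

definition mW :: real where "mW = min (\<alpha> 0 * \<gamma> 0 * \<mu>W / \<omega>) (\<mu>W / LW)"

definition rate :: real where
  "rate = min (min (\<mu>W / 2 * min (\<alpha> 0 * \<gamma> 0) (\<omega> / LW))
                   (\<mu>W * (1 - \<omega>\<^sup>2) / (2 * \<omega> ^ 3 * LW + \<mu>W * (1 - \<omega>\<^sup>2))))
              ((\<tau> - 1) * mW / (\<tau> * (2 * (1 - \<omega>\<^sup>2) + mW)))"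

lemma near_minimizer_in_ball:
  assumes "norm (p - xstar) \<le> 3 * sqrt \<eta>"
  shows "p \<in> cball 0 R"
proof -
  have "norm xstar \<le> norm (x 0) + norm (x 0 - xstar)"
    using norm_triangle_ineq4[of "x 0" "x 0 - xstar"] by simp
  moreover have "norm p \<le> norm xstar + norm (p - xstar)" by (rule norm_triangle_sub)
  ultimately show ?thesis using assms radius by simp
qed

lemma iterate_near_minimizer: "norm (x k - xstar) \<le> 3 * sqrt \<eta>"
  using dist_iterate_le[of k] real_sqrt_ge_zero[OF eta_nonneg] by linarith

lemma iterate_in_ball: "x k \<in> cball 0 R"
  by (rule near_minimizer_in_ball[OF iterate_near_minimizer])

lemma minimizer_in_ball: "xstar \<in> cball 0 R"
  using near_minimizer_in_ball[of xstar] eta_nonneg by simp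

lemma radius_pos: "0 < R"
  using radius real_sqrt_ge_zero[OF eta_nonneg] norm_ge_zero[of "x 0"] norm_ge_zero[of "x 0 - xstar"]
  by linarith

lemma nonzero_in_ball:
  obtains v :: 'a where "v \<in> cball 0 R" "v \<noteq> 0"
proof -
  obtain b :: 'a where "b \<in> Basis" using nonempty_Basis by blast
  then show ?thesis using radius_pos by (intro that[of "(R/2) *\<^sub>R b"]) auto
qed

lemma monotonicity_quotients_bdd_below: "bdd_below monotonicity_quotients"
  unfolding monotonicity_quotients_def
  by (rule bdd_belowI[of _ 0]) (auto intro!: divide_nonneg_nonneg convex_gradient_monotone[OF convex gradient])

lemma strongly_monotone_on_ball:
  assumes "y \<in> cball 0 R" "z \<in> cball 0 R"
  shows "\<mu>W * (norm (y - z))\<^sup>2 \<le> (g y - g z) \<bullet> (y - z)"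
proof (cases "y = z")
  case False
  have "\<mu>W \<le> (g y - g z) \<bullet> (y - z) / (norm (y - z))\<^sup>2"
    unfolding \<mu>W_def using monotonicity_quotients_bdd_below
    by (rule cInf_lower[rotated]) (use assms False in \<open>auto simp: monotonicity_quotients_def\<close>)
  then show ?thesis using False by (simp add: le_divide_eq)
qed simp

lemma \<mu>W_pos: "0 < \<mu>W"
proof -
  obtain \<mu> where "0 < \<mu>"
    and mono: "\<And>y z. y \<in> cball 0 R \<Longrightarrow> z \<in> cball 0 R \<Longrightarrow> \<mu> * (norm (y - z))\<^sup>2 \<le> (g y - g z) \<bullet> (y - z)"
    using strongly_monotone_on_compact_convex[OF local_strong_convexity compact_cball convex_cball] by blast
  obtain v :: 'a where v: "v \<in> cball 0 R" "v \<noteq> 0" by (rule nonzero_in_ball)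
  have "0 \<in> cball 0 R" using radius_pos by simp
  then have "(g v - g 0) \<bullet> (v - 0) / (norm (v - 0))\<^sup>2 \<in> monotonicity_quotients"
    unfolding monotonicity_quotients_def using v by blast
  have "\<mu> \<le> \<mu>W" unfolding \<mu>W_def
  proof (rule cInf_greatest)
    show "monotonicity_quotients \<noteq> {}" using \<open>_ \<in> monotonicity_quotients\<close> by blast
    show "\<mu> \<le> r" if "r \<in> monotonicity_quotients" for r
      using that mono unfolding monotonicity_quotients_def by (auto simp: pos_le_divide_eq)
  qed
  then show ?thesis using \<open>0 < \<mu>\<close> by linarith
qed

lemma \<mu>W_le_LW: "\<mu>W \<le> LW"
proof -
  obtain v :: 'a where v: "v \<in> cball 0 R" "v \<noteq> 0" by (rule nonzero_in_ball)
  have "0 \<in> cball 0 R" using radius_pos by simp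
  have "\<mu>W * (norm v)\<^sup>2 \<le> (g v - g 0) \<bullet> v"
    using strongly_monotone_on_ball[OF v(1) \<open>0 \<in> cball 0 R\<close>] by simp
  also have "\<dots> \<le> norm (g v - g 0) * norm v" by (rule norm_cauchy_schwarz)
  also have "\<dots> \<le> LW * (norm v)\<^sup>2"
    using mult_right_mono[OF LW_lipschitz[OF v(1) \<open>0 \<in> cball 0 R\<close>] norm_ge_zero[of v]]
    by (simp add: power2_eq_square mult.assoc)
  finally show ?thesis using v(2) by simp
qed

lemma strong_convexity_on_ball:
  assumes "y \<in> cball 0 R" "z \<in> cball 0 R"
  shows "f z + g z \<bullet> (y - z) + \<mu>W/2 * (norm (y - z))\<^sup>2 \<le> f y"
  using strong_convexity_of_strongly_monotone_gradient[OF gradient convex_cball assms strongly_monotone_on_ball] .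

lemma descent_on_ball:
  assumes "y \<in> cball 0 R" "z \<in> cball 0 R"
  shows "f y \<le> f z + g z \<bullet> (y - z) + LW/2 * (norm (y - z))\<^sup>2"
  using descent_of_lipschitz_gradient[OF gradient convex_cball assms LW_lipschitz] .

lemma gap_plus_gradient_norm_le:
  assumes y: "norm (y - xstar) \<le> 3 * sqrt \<eta>"
  shows "f y - f xstar + (norm (g y))\<^sup>2/(2*LW) \<le> g y \<bullet> (y - xstar)"
proof -
  define p where "p = xstar + (1/LW) *\<^sub>R g y"
  have "norm (g y) \<le> LW * norm (y - xstar)"
    using LW_lipschitz[OF near_minimizer_in_ball[OF y] minimizer_in_ball] gradient_at_minimizer by simp
  then have "norm (p - xstar) \<le> norm (y - xstar)" unfolding p_def using LW_pos by (simp add: divide_le_eq mult.commute)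
  then have "p \<in> cball 0 R" using y near_minimizer_in_ball by simp
  from descent_on_ball[OF this minimizer_in_ball]
  have "f p \<le> f xstar + (norm (g y))\<^sup>2/(2*LW)"
    unfolding p_def using gradient_at_minimizer LW_pos by (simp add: power_mult_distrib power2_eq_square)
  moreover have "f y + g y \<bullet> (p - y) \<le> f p" by (rule convex_gradient_inequality[OF convex gradient])
  moreover have "g y \<bullet> (p - y) = 2*((norm (g y))\<^sup>2/(2*LW)) - g y \<bullet> (y - xstar)"
    unfolding p_def using LW_pos by (simp add: inner_diff_right inner_add_right power2_norm_eq_inner)
  ultimately show ?thesis by linarith
qed

lemma Lk_le_LW: "Lk k \<le> LW"
  using LW_lipschitz[OF iterate_in_ball iterate_in_ball, of k "k - 1"] LW_pos
  unfolding Lk_def by (cases "x k = x (k - 1)") (auto simp: divide_le_eq)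

lemma ag_lower: "min (ag 0) (\<omega> / LW) \<le> ag k"
proof (induction k)
  case 0
  show ?case by simp
next
  case (Suc k)
  have "0 \<le> \<theta> k/\<tau>" using theta_pos[of k] tau_gt_1 by simp
  then have "1 \<le> 2*(1-\<omega>\<^sup>2) + \<theta> k/\<tau>" using omega_sq_le by simp
  then have "ag k * 1 \<le> ag k * sqrt (2*(1-\<omega>\<^sup>2) + \<theta> k/\<tau>)" using ag_pos[of k] by (intro mult_left_mono) auto
  moreover have "\<omega> / LW \<le> \<omega> / Lk (Suc k)" if "Lk (Suc k) \<noteq> 0"
    using that Lk_nonneg[of "Suc k"] Lk_le_LW[of "Suc k"] omega_pos by (intro divide_left_mono) auto
  ultimately show ?case
    using Suc step_rule_ag[of "Suc k"] min.cobounded2[of "ag 0" "\<omega> / LW"] by (auto simp: min.bounded_iff)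
qed

lemma mW_pos: "0 < mW"
  unfolding mW_def using alpha0_pos gamma_pos[of 0] \<mu>W_pos omega_pos LW_pos by simp

lemma rate_pos: "0 < rate"
  unfolding rate_def using alpha0_pos gamma_pos[of 0] \<mu>W_pos omega_pos LW_pos mW_pos omega_sq_lt_1 tau_gt_1
  by (simp add: add_pos_pos)

lemma rate_le_min_step: "rate \<le> \<mu>W / 2 * min (ag 0) (\<omega> / LW)"
  unfolding rate_def ag_def by (rule min.coboundedI1, rule min.cobounded1)

lemma rate_le_step: "2 * rate \<le> \<mu>W * ag k"
proof -
  have "\<mu>W / 2 * min (ag 0) (\<omega> / LW) \<le> \<mu>W / 2 * ag k"
    using ag_lower[of k] \<mu>W_pos by (intro mult_left_mono) auto
  with rate_le_min_step have "rate \<le> \<mu>W / 2 * ag k" by (rule order_trans)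
  then show ?thesis by simp
qed

lemma rate_le_weight: "rate \<le> \<mu>W * (1 - \<omega>\<^sup>2) / (2 * \<omega> ^ 3 * LW + \<mu>W * (1 - \<omega>\<^sup>2))"
  unfolding rate_def by simp

lemma rate_le_tau: "rate \<le> 1 - 1/\<tau>"
proof -
  have "rate \<le> (\<tau> - 1) * mW / (\<tau> * (2 * (1 - \<omega>\<^sup>2) + mW))" unfolding rate_def by simp
  also have "\<dots> = (1 - 1/\<tau>) * (mW / (2 * (1 - \<omega>\<^sup>2) + mW))" using tau_gt_1 by (simp add: field_simps)
  also have "\<dots> \<le> (1 - 1/\<tau>) * 1"
    using mW_pos omega_sq_lt_1 tau_gt_1 by (intro mult_left_mono) auto
  finally show ?thesis by simp
qed

lemma rate_lt_1: "rate < 1"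
proof -
  have "\<mu>W / 2 * min (ag 0) (\<omega> / LW) \<le> \<mu>W / 2 * (\<omega> / LW)"
    using \<mu>W_pos by (intro mult_left_mono) auto
  with rate_le_min_step have "rate \<le> \<mu>W / 2 * (\<omega> / LW)" by (rule order_trans)
  also have "\<dots> \<le> LW / 2 * (\<omega> / LW)" using \<mu>W_le_LW omega_pos LW_pos by (intro mult_right_mono) auto
  also have "\<dots> = \<omega> / 2" using LW_pos by simp
  also have "\<dots> < 1" using power2_le_imp_le[of \<omega> 1] omega_sq_le by simp
  finally show ?thesis .
qed

lemma lyapunov_contraction:
  assumes k: "k \<ge> 1"
  shows "lyapunov k \<le> (1 - rate) * lyapunov (k - 1)"
proof -
  define d u G H where "d = x k - xstar" and "u = x k - x (k - 1)" and "G = g (x k)" and "H = g (x (k - 1))"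
  define a h Fx Fy where "a = ag (k - 1)" and "h = ag k"
    and "Fx = f (x k) - f xstar" and "Fy = f (x (k - 1)) - f xstar"
  define c where "c = \<omega>\<^sup>2 / (1 - \<omega>\<^sup>2) + \<mu>W / (2 * \<omega> * LW)"
  have Sk: "Suc (k - 1) = k" using k by simp
  have a: "0 < a" and h: "0 < h" and Fy: "0 \<le> Fy" unfolding a_def h_def Fy_def using ag_pos minimizer by auto
  have uH: "u = - (a *\<^sub>R H)" using iteration_ag[of "k - 1"] unfolding u_def a_def H_def Sk by simp
  have xk: "x k \<in> cball 0 R" and xk1: "x (k - 1) \<in> cball 0 R" by (rule iterate_in_ball)+
  have "lyapunov k = (norm (d - h *\<^sub>R G))\<^sup>2 + c * (norm (h *\<^sub>R G))\<^sup>2 + 2*h*(1 + (h/a)/(2*(1-\<omega>\<^sup>2)))*Fx"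
  proof -
    have "x (Suc k) - xstar = d - h *\<^sub>R G" "norm (x (Suc k) - x k) = norm (h *\<^sub>R G)"
      unfolding d_def h_def G_def iteration_ag by (simp_all add: algebra_simps)
    then show ?thesis unfolding lyapunov_def c_def theta_ag[OF k] h_def a_def Fx_def ag_def by (simp add: mult.assoc)
  qed
  also have "\<dots> \<le> (1 - rate) * ((norm d)\<^sup>2 + c * (norm u)\<^sup>2 + 2*a*(1 + \<theta> (k - 1)/(2*(1-\<omega>\<^sup>2)))*Fy)"
    unfolding c_def
  proof (rule lyapunov_contraction_step[OF a h \<mu>W_pos LW_pos omega_pos omega_sq_le _ uH Fy])
    show "0 \<le> \<theta> (k - 1)" using theta_pos less_imp_le by blast
    show "Fx + \<mu>W/2*(norm d)\<^sup>2 \<le> G \<bullet> d"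
      using strong_convexity_on_ball[OF minimizer_in_ball xk]
      unfolding Fx_def G_def d_def by (simp add: inner_diff_right norm_minus_commute)
    show "Fx + (norm G)\<^sup>2/(2*LW) \<le> G \<bullet> d"
      unfolding Fx_def G_def d_def by (rule gap_plus_gradient_norm_le[OF iterate_near_minimizer])
    show "- (G \<bullet> u) + \<mu>W/2*(norm u)\<^sup>2 \<le> Fy - Fx"
      using strong_convexity_on_ball[OF xk1 xk]
      unfolding G_def u_def Fx_def Fy_def by (simp add: inner_diff_right norm_minus_commute)
    show "Fy \<le> H \<bullet> (d - u) - \<mu>W/2*(norm (d - u))\<^sup>2"
      using strong_convexity_on_ball[OF minimizer_in_ball xk1]
      unfolding Fy_def H_def d_def u_def by (simp add: inner_diff_right norm_minus_commute)
    show "\<mu>W*(norm u)\<^sup>2 \<le> (G - H) \<bullet> u"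
      unfolding G_def H_def u_def by (rule strongly_monotone_on_ball[OF xk xk1])
    show "h * norm (G - H) \<le> \<omega> * norm u"
      unfolding h_def G_def H_def u_def by (rule ag_local_lipschitz[OF k])
    show "h\<^sup>2 \<le> a\<^sup>2 * (2*(1-\<omega>\<^sup>2) + \<theta> (k - 1)/\<tau>)"
      unfolding h_def a_def by (rule ag_growth[OF k])
    show "0 < rate" "2*rate \<le> \<mu>W*h" "2*rate \<le> \<mu>W*a"
      unfolding h_def a_def by (rule rate_pos rate_le_step)+
    show "rate \<le> \<mu>W*(1-\<omega>\<^sup>2)/(2*\<omega>^3*LW + \<mu>W*(1-\<omega>\<^sup>2))" "rate \<le> 1 - 1/\<tau>"
      by (rule rate_le_weight rate_le_tau)+
  qed
  also have "\<dots> = (1 - rate) * lyapunov (k - 1)"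
    unfolding lyapunov_def c_def Sk d_def u_def a_def Fy_def ag_def by (simp add: mult.assoc)
  finally show ?thesis .
qed

end

theorem theorem4p5:
  fixes f :: "'a::euclidean_space \<Rightarrow> real" and g :: "'a \<Rightarrow> 'a"
    and x :: "nat \<Rightarrow> 'a" and \<alpha> \<theta> \<gamma> :: "nat \<Rightarrow> real"
    and \<tau> \<omega> \<gamma>min \<gamma>max R LW :: real and xstar :: 'a
  assumes cvx: "convex_on UNIV f"
    and grad: "\<And>z. (f has_derivative (\<lambda>h. g z \<bullet> h)) (at z)"
    and gcont: "continuous_on UNIV g"
    and lsc: "locally_strongly_convex f g"
    and llg: "locally_lipschitz_grad g"
    and nonempty: "argmin_set f \<noteq> {}"
    and a0: "\<alpha> 0 > 0" and t0: "\<theta> 0 > 0" and tau: "\<tau> > 1"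
    and om: "0 < \<omega>" "\<omega> \<le> 1 / sqrt 2"
    and gam: "0 < \<gamma>min" "\<gamma>min \<le> \<gamma>max" "\<And>k. \<gamma> k \<in> {\<gamma>min..\<gamma>max}"
    and iter: "\<And>k. x (Suc k) = x k - (\<alpha> k * \<gamma> k) *\<^sub>R g (x k)"
    and step: "\<And>k. k \<ge> 1 \<Longrightarrow>
       (let Lk = norm (g (x k) - g (x (k - 1))) / norm (x k - x (k - 1));
            A = \<alpha> (k - 1) * \<gamma> (k - 1) / \<gamma> k * sqrt (2 * (1 - \<omega>\<^sup>2) + \<theta> (k - 1) / \<tau>)
        in \<alpha> k = (if Lk = 0 then A else min A (\<omega> / (\<gamma> k * Lk))))"
    and theta: "\<And>k. k \<ge> 1 \<Longrightarrow> \<theta> k = \<alpha> k * \<gamma> k / (\<alpha> (k - 1) * \<gamma> (k - 1))"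
    and R: "R > 3 * sqrt (infdist (x 0) (argmin_set f) ^ 2
                 + 2 * \<alpha> 0 ^ 2 * \<gamma> 0 ^ 2 * norm (g (x 0)) ^ 2
                 + 2 * \<alpha> 0 * \<gamma> 0 * \<theta> 0 * (f (x 0) - opt_val f))
             + infdist (x 0) (argmin_set f) + norm (x 0)"
    and LW: "LW > 0" "\<And>y z. y \<in> cball 0 R \<Longrightarrow> z \<in> cball 0 R \<Longrightarrow> norm (g y - g z) \<le> LW * norm (y - z)"
    and xs: "xstar \<in> argmin_set f"
  shows "let \<mu>W = Inf {(g y - g z) \<bullet> (y - z) / (norm (y - z))\<^sup>2 | y z.
                         y \<in> cball 0 R \<and> z \<in> cball 0 R \<and> y \<noteq> z};
             fs = opt_val f;
             Lhat = (\<lambda>k. (norm (x (Suc k) - xstar))\<^sup>2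
                  + (\<omega>\<^sup>2 / (1 - \<omega>\<^sup>2) + \<mu>W / (2 * \<omega> * LW)) * (norm (x (Suc k) - x k))\<^sup>2
                  + 2 * \<alpha> k * \<gamma> k * (1 + \<theta> k / (2 * (1 - \<omega>\<^sup>2))) * (f (x k) - fs));
             m = min (\<alpha> 0 * \<gamma> 0 * \<mu>W / \<omega>) (\<mu>W / LW);
             q = min (min (\<mu>W / 2 * min (\<alpha> 0 * \<gamma> 0) (\<omega> / LW))
                          (\<mu>W * (1 - \<omega>\<^sup>2) / (2 * \<omega> ^ 3 * LW + \<mu>W * (1 - \<omega>\<^sup>2))))
                     ((\<tau> - 1) * m / (\<tau> * (2 * (1 - \<omega>\<^sup>2) + m)))
         in 0 < q \<and> q < 1 \<and> (\<forall>k\<ge>1. Lhat k \<le> (1 - q) * Lhat (k - 1))"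
proof -
  have minimizer: "\<And>y. f xstar \<le> f y" using xs unfolding argmin_set_def by blast
  have "\<omega>\<^sup>2 \<le> (1 / sqrt 2)\<^sup>2" using om by (intro power_mono) auto
  then have "\<omega>\<^sup>2 \<le> 1/2" by (simp add: power_divide)
  then interpret adaptive_gradient f g xstar x \<alpha> \<theta> \<gamma> \<tau> \<omega>
    using cvx grad minimizer a0 t0 tau om(1) gam iter step theta
    by unfold_locales (auto intro: less_le_trans)
  have "argmin_set f = {xstar}" by (rule argmin_set_eq_singleton[OF cvx grad lsc xs])
  then have dist: "infdist (x 0) (argmin_set f) = norm (x 0 - xstar)" by (simp add: dist_norm)
  have opt: "opt_val f = f xstar" unfolding opt_val_def by (rule cInf_eq_minimum) (auto simp: minimizer)
  interpret adaptive_gradient_on_ball f g xstar x \<alpha> \<theta> \<gamma> \<tau> \<omega> R LW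
    using lsc R LW unfolding dist opt by unfold_locales (simp_all add: \<eta>_def ag_def power_mult_distrib mult.assoc)
  show ?thesis
    using rate_pos rate_lt_1 lyapunov_contraction
    unfolding Let_def opt rate_def mW_def lyapunov_def \<mu>W_def monotonicity_quotients_def by blast
qed

end
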